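(* Assume the periodic setting below, let $\mu>0$, and let $K\ge1$ be a constant with $|u|_{p^*(x)}\le K\|u\|$ for all $u\in W^{1,p(x)}(\mathbb{R}^N)$. Let $\nu=\frac1{p_+}-\frac1{q_-}$. Let $(v_n)$ be a $(PS)_d$ sequence for $I_\infty$ with $d<\frac{\nu}{2K^{p_+}}$. Then there exists $n_0\in\mathbb{N}$ such that for all $n\ge n_0$, $$\Big(\int_{\mathbb{R}^N}|v_n|^{p^*(x)}\Big)^{1/p^*_-}\le K\Big(\int_{\mathbb{R}^N}(|\nabla v_n|^{p(x)}+V(x)|v_n|^{p(x)})\Big)^{1/p_+}.$$
   Context: Periodic setting: $N\ge2$; $p:\mathbb{R}^N\to\mathbb{R}$ Lipschitz, $q,V:\mathbb{R}^N\to[0,\infty)$ continuous and $\mathbb{Z}^N$-periodic; $1<p_-\le p\le p_+<N$; $p_+<q_-\le q\ll p^*$; $\inf V=V_0>0$ ($h_\pm$ ess sup/inf, $h^*=Nh/(N-h)$, $h\ll g$ means $\inf(g-h)>0$). $|u|_{h(x)}=\inf\{\lambda>0:\int|u/\lambda|^{h(x)}\le1\}$ and $\|u\|=\inf\{\lambda>0:\int(|\nabla u/\lambda|^{p(x)}+V|u/\lambda|^{p(x)})\le1\}$ on $W^{1,p(x)}(\mathbb{R}^N)$. $I_\infty(u)=\int\frac{1}{p(x)}(|\nabla u|^{p(x)}+V|u|^{p(x)})-\mu\int\frac{|u|^{q(x)}}{q(x)}-\int\frac{|u|^{p^*(x)}}{p^*(x)}$. $(PS)_d$ sequence: $I_\infty(v_n)\to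 d$, $I_\infty'(v_n)\to0$. *)

theory Defs
  imports "HOL-Analysis.Analysis"
begin

fun ddiff :: "'a::euclidean_space list \<Rightarrow> ('a \<Rightarrow> real) \<Rightarrow> ('a \<Rightarrow> real)" where
  "ddiff [] f = f"
| "ddiff (h # hs) f = (\<lambda>x. frechet_derivative (ddiff hs f) (at x) h)"

definition smooth_fun :: "('a::euclidean_space \<Rightarrow> real) \<Rightarrow> bool" where
  "smooth_fun f \<longleftrightarrow> (\<forall>hs x. ddiff hs f differentiable (at x))"

definition test_fun :: "('a::euclidean_space \<Rightarrow> real) \<Rightarrow> bool" where
  "test_fun \<phi> \<longleftrightarrow> smooth_fun \<phi> \<and> (\<exists>R. \<forall>x. R < norm x \<longrightarrow> \<phi> x = 0)"

definition weak_grad :: "('a::euclidean_space \<Rightarrow> real) \<Rightarrow> ('a \<Rightarrow> 'a) \<Rightarrow> bool" where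
  "weak_grad u g \<longleftrightarrow> u \<in> borel_measurable lborel \<and> g \<in> borel_measurable lborel \<and>
     (\<forall>r. set_integrable lborel (cball 0 r) u \<and> set_integrable lborel (cball 0 r) (\<lambda>x. norm (g x))) \<and>
     (\<forall>\<phi> i. test_fun \<phi> \<longrightarrow> i \<in> Basis \<longrightarrow>
        (\<integral>x. u x * frechet_derivative \<phi> (at x) i \<partial>lborel) = - (\<integral>x. (g x \<bullet> i) * \<phi> x \<partial>lborel))"

definition lp_mem :: "('a::euclidean_space \<Rightarrow> real) \<Rightarrow> ('a \<Rightarrow> real) \<Rightarrow> bool" where
  "lp_mem h u \<longleftrightarrow> u \<in> borel_measurable lborel \<and>
     (\<integral>\<^sup>+ x. ennreal (\<bar>u x\<bar> powr h x) \<partial>lborel) < \<infinity>"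

definition sobW :: "('a::euclidean_space \<Rightarrow> real) \<Rightarrow> ('a \<Rightarrow> real) set" where
  "sobW p = {u. lp_mem p u \<and> (\<exists>g. weak_grad u g \<and> lp_mem p (\<lambda>x. norm (g x)))}"

definition grad :: "('a::euclidean_space \<Rightarrow> real) \<Rightarrow> ('a \<Rightarrow> real) \<Rightarrow> ('a \<Rightarrow> 'a)" where
  "grad p u = (SOME g. weak_grad u g \<and> lp_mem p (\<lambda>x. norm (g x)))"

definition lux :: "('a::euclidean_space \<Rightarrow> real) \<Rightarrow> ('a \<Rightarrow> real) \<Rightarrow> real" where
  "lux h u = Inf {s. 0 < s \<and> (\<integral>\<^sup>+ x. ennreal ((\<bar>u x\<bar> / s) powr h x) \<partial>lborel) \<le> 1}"

definition wnorm :: "('a::euclidean_space \<Rightarrow> real) \<Rightarrow> ('a \<Rightarrow> real) \<Rightarrow> ('a \<Rightarrow> real) \<Rightarrow> real" where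
  "wnorm V p u = Inf {s. 0 < s \<and>
     (\<integral>\<^sup>+ x. ennreal ((norm (grad p u x) / s) powr p x + V x * (\<bar>u x\<bar> / s) powr p x) \<partial>lborel) \<le> 1}"

definition pstar :: "('a::euclidean_space \<Rightarrow> real) \<Rightarrow> 'a \<Rightarrow> real" where
  "pstar p x = real DIM('a) * p x / (real DIM('a) - p x)"

definition Z_periodic :: "('a::euclidean_space \<Rightarrow> real) \<Rightarrow> bool" where
  "Z_periodic f \<longleftrightarrow> (\<forall>x z. (\<forall>i\<in>Basis. z \<bullet> i \<in> \<int>) \<longrightarrow> f (x + z) = f x)"

definition I_inf :: "real \<Rightarrow> ('a::euclidean_space \<Rightarrow> real) \<Rightarrow> ('a \<Rightarrow> real) \<Rightarrow> ('a \<Rightarrow> real)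
    \<Rightarrow> ('a \<Rightarrow> real) \<Rightarrow> real" where
  "I_inf \<mu> p q V u =
     (\<integral>x. (1 / p x) * (norm (grad p u x) powr p x + V x * \<bar>u x\<bar> powr p x) \<partial>lborel)
     - \<mu> * (\<integral>x. \<bar>u x\<bar> powr q x / q x \<partial>lborel)
     - (\<integral>x. \<bar>u x\<bar> powr pstar p x / pstar p x \<partial>lborel)"

definition I_inf_deriv :: "real \<Rightarrow> ('a::euclidean_space \<Rightarrow> real) \<Rightarrow> ('a \<Rightarrow> real) \<Rightarrow> ('a \<Rightarrow> real)
    \<Rightarrow> ('a \<Rightarrow> real) \<Rightarrow> ('a \<Rightarrow> real) \<Rightarrow> real" where
  "I_inf_deriv \<mu> p q V u \<phi> = deriv (\<lambda>t::real. I_inf \<mu> p q V (\<lambda>x. u x + t * \<phi> x)) 0"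

end

theory Submission
  imports Defs
begin

text \<open>Write \<open>\<rho>(u) = \<integral> |\<nabla>u|\<^sup>p\<^sup>(\<^sup>x\<^sup>) + V |u|\<^sup>p\<^sup>(\<^sup>x\<^sup>)\<close> and \<open>\<nu> = 1/p\<^sub>+ - 1/q\<^sub>-\<close>.
  Differentiating \<open>I\<^sub>\<infinity>\<close> along the ray \<open>s \<mapsto> s v\<close> gives
  \<open>I\<^sub>\<infinity>(v) - I\<^sub>\<infinity>'(v) v / q\<^sub>- \<ge> \<nu> \<rho>(v)\<close>, because the subcritical and the critical term
  enter with the nonnegative weights \<open>1/q\<^sub>- - 1/q\<close> and \<open>1/q\<^sub>- - 1/p\<^sup>*\<close>. Testing \<open>I\<^sub>\<infinity>'(v\<^sub>n)\<close>
  against \<open>v\<^sub>n / (\<parallel>v\<^sub>n\<parallel> + 1)\<close> and using \<open>\<parallel>v\<parallel> \<le> 1 + \<rho>(v)\<close>, the Palais--Smale conditions and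
  \<open>d < \<nu> / (2 K\<^sup>p\<^sup>+)\<close> force \<open>\<rho>(v\<^sub>n) < K\<^sup>-\<^sup>p\<^sup>+\<close> eventually. Then
  \<open>\<parallel>v\<^sub>n\<parallel> \<le> \<rho>(v\<^sub>n)\<^sup>1\<^sup>/\<^sup>p\<^sup>+ < 1/K\<close>, so \<open>|v\<^sub>n|\<^sub>p\<^sub>* \<le> K \<parallel>v\<^sub>n\<parallel> < 1\<close>, and below \<open>1\<close> the
  Luxemburg norm dominates \<open>(\<integral> |v\<^sub>n|\<^sup>p\<^sup>*)\<^sup>1\<^sup>/\<^sup>p\<^sup>*\<^sup>-\<close>.

  Computing \<open>I\<^sub>\<infinity>(s v)\<close> needs \<open>\<nabla>(s v) = s \<nabla>v\<close> a.e.: the gradient is chosen by \<open>SOME\<close>, so this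
  rests on the uniqueness of weak gradients, proved with smooth bump functions and the fundamental
  lemma of the calculus of variations.\<close>

section \<open>Smooth bump functions\<close>

abbreviation dir_deriv :: "('a::euclidean_space \<Rightarrow> real) \<Rightarrow> 'a \<Rightarrow> 'a \<Rightarrow> real" where
  "dir_deriv f h \<equiv> (\<lambda>x. frechet_derivative f (at x) h)"

definition differentiable_upto :: "nat \<Rightarrow> ('a::euclidean_space \<Rightarrow> real) \<Rightarrow> bool" where
  "differentiable_upto n f \<longleftrightarrow> (\<forall>hs. length hs \<le> n \<longrightarrow> (\<forall>x. ddiff hs f differentiable (at x)))"

lemma ddiff_append_single: "ddiff (hs @ [h]) f = ddiff hs (dir_deriv f h)"
  by (induction hs) auto

lemma differentiable_upto_0: "differentiable_upto 0 f \<longleftrightarrow> (\<forall>x. f differentiable (at x))"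
  unfolding differentiable_upto_def by auto

lemma differentiable_upto_Suc:
  "differentiable_upto (Suc n) f \<longleftrightarrow>
     (\<forall>x. f differentiable (at x)) \<and> (\<forall>h. differentiable_upto n (dir_deriv f h))"
proof
  assume f: "differentiable_upto (Suc n) f"
  show "(\<forall>x. f differentiable (at x)) \<and> (\<forall>h. differentiable_upto n (dir_deriv f h))"
    using f[unfolded differentiable_upto_def, rule_format, of "[]"]
      f[unfolded differentiable_upto_def, rule_format, of "_ @ [_]"]
    by (auto simp: differentiable_upto_def ddiff_append_single)
next
  assume f: "(\<forall>x. f differentiable (at x)) \<and> (\<forall>h. differentiable_upto n (dir_deriv f h))"
  show "differentiable_upto (Suc n) f"
    unfolding differentiable_upto_def
  proof (intro allI impI)
    fix hs :: "'a list" and x assume "length hs \<le> Suc n"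
    then show "ddiff hs f differentiable (at x)"
      using f by (cases hs rule: rev_cases) (auto simp: differentiable_upto_def ddiff_append_single)
  qed
qed

lemma smooth_fun_iff_differentiable_upto: "smooth_fun f \<longleftrightarrow> (\<forall>n. differentiable_upto n f)"
  unfolding smooth_fun_def differentiable_upto_def by auto

lemma differentiable_upto_SucD: "differentiable_upto (Suc n) f \<Longrightarrow> differentiable_upto n f"
  unfolding differentiable_upto_def by auto

lemma differentiable_upto_const: "differentiable_upto n (\<lambda>x. c)"
  by (induction n arbitrary: c) (simp_all add: differentiable_upto_0 differentiable_upto_Suc)

lemma differentiable_upto_bounded_linear:
  assumes f: "bounded_linear f"
  shows "differentiable_upto n f"
proof (cases n)
  case 0
  then show ?thesis using f by (simp add: differentiable_upto_0 bounded_linear_imp_differentiable)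
next
  case (Suc m)
  have "dir_deriv f h = (\<lambda>x. f h)" for h
    using frechet_derivative_at[OF bounded_linear_imp_has_derivative[OF f]] by metis
  then show ?thesis
    using Suc f by (simp add: differentiable_upto_Suc differentiable_upto_const
        bounded_linear_imp_differentiable)
qed

lemma frechet_derivative_add_at:
  fixes f g :: "'a::real_normed_vector \<Rightarrow> real"
  assumes "f differentiable (at x)" "g differentiable (at x)"
  shows "frechet_derivative (\<lambda>x. f x + g x) (at x) h
           = frechet_derivative f (at x) h + frechet_derivative g (at x) h"
  using assms by (metis (no_types) frechet_derivative_at frechet_derivative_works has_derivative_add)

lemma frechet_derivative_mult_at:
  fixes f g :: "'a::real_normed_vector \<Rightarrow> real"
  assumes "f differentiable (at x)" "g differentiable (at x)"
  shows "frechet_derivative (\<lambda>x. f x * g x) (at x) h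
           = f x * frechet_derivative g (at x) h + frechet_derivative f (at x) h * g x"
proof -
  have "((\<lambda>x. f x * g x) has_derivative
         (\<lambda>h. f x * frechet_derivative g (at x) h + frechet_derivative f (at x) h * g x)) (at x)"
    using has_derivative_mult assms by (simp add: frechet_derivative_works)
  then show ?thesis by (metis frechet_derivative_at)
qed

lemma differentiable_upto_add:
  "differentiable_upto n f \<Longrightarrow> differentiable_upto n g \<Longrightarrow> differentiable_upto n (\<lambda>x. f x + g x)"
proof (induction n arbitrary: f g)
  case (Suc n)
  then have "\<forall>x. f differentiable (at x)" "\<forall>x. g differentiable (at x)"
    by (auto simp: differentiable_upto_Suc)
  moreover have "dir_deriv (\<lambda>x. f x + g x) h = (\<lambda>x. dir_deriv f h x + dir_deriv g h x)" for h
    using frechet_derivative_add_at calculation by blast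
  ultimately show ?case using Suc by (simp add: differentiable_upto_Suc)
qed (simp add: differentiable_upto_0)

lemma differentiable_upto_mult:
  "differentiable_upto n f \<Longrightarrow> differentiable_upto n g \<Longrightarrow> differentiable_upto n (\<lambda>x. f x * g x)"
proof (induction n arbitrary: f g)
  case (Suc n)
  then have df: "\<forall>x. f differentiable (at x)" and dg: "\<forall>x. g differentiable (at x)"
    by (auto simp: differentiable_upto_Suc)
  have "dir_deriv (\<lambda>x. f x * g x) h = (\<lambda>x. f x * dir_deriv g h x + dir_deriv f h x * g x)" for h
    using frechet_derivative_mult_at df dg by blast
  moreover have "differentiable_upto n (\<lambda>x. f x * dir_deriv g h x + dir_deriv f h x * g x)" for h
    using Suc by (intro differentiable_upto_add Suc.IH)
      (auto simp: differentiable_upto_Suc intro: differentiable_upto_SucD)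
  ultimately show ?case using df dg by (simp add: differentiable_upto_Suc)
qed (simp add: differentiable_upto_0)

lemma differentiable_upto_polynomial: "real_polynomial_function f \<Longrightarrow> differentiable_upto n f"
  by (induction rule: real_polynomial_function.induct)
    (auto intro: differentiable_upto_bounded_linear differentiable_upto_const
      differentiable_upto_add differentiable_upto_mult)

lemma real_polynomial_function_deriv:
  fixes Q :: "real \<Rightarrow> real"
  assumes "real_polynomial_function Q"
  shows "real_polynomial_function (deriv Q)" "(Q has_real_derivative deriv Q y) (at y)"
proof -
  obtain Q' where Q': "real_polynomial_function Q'" "\<And>y. (Q has_real_derivative Q' y) (at y)"
    using has_real_derivative_polynomial_function[OF assms] by blast
  then have "deriv Q = Q'" by (intro ext DERIV_imp_deriv)
  with Q' show "real_polynomial_function (deriv Q)" "(Q has_real_derivative deriv Q y) (at y)"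
    by auto
qed

lemma polynomial_div_exp_tendsto_0:
  fixes Q :: "real \<Rightarrow> real"
  assumes "real_polynomial_function Q"
  shows "((\<lambda>y. Q y / exp y) \<longlongrightarrow> 0) at_top"
proof -
  obtain a n where Q: "Q = (\<lambda>y. \<Sum>i\<le>n. a i * y ^ i)"
    using real_polynomial_function_imp_sum[OF assms] by blast
  have "((\<lambda>y. \<Sum>i\<le>n. a i * (y ^ i / exp y)) \<longlongrightarrow> (\<Sum>i\<le>n. a i * 0)) at_top"
    by (intro tendsto_sum tendsto_mult tendsto_const tendsto_power_div_exp_0)
  then show ?thesis by (simp add: Q sum_divide_distrib)
qed

definition damped :: "(real \<Rightarrow> real) \<Rightarrow> real \<Rightarrow> real" where
  "damped Q t = (if t > 0 then Q (1 / t) * exp (- (1 / t)) else 0)"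

text \<open>For \<open>t > 0\<close> the derivative of \<open>Q (1/t) e\<^sup>-\<^sup>1\<^sup>/\<^sup>t\<close> is
  \<open>(1/t)\<^sup>2 (Q (1/t) - Q' (1/t)) e\<^sup>-\<^sup>1\<^sup>/\<^sup>t\<close>, so damped polynomials are closed under
  differentiation.\<close>
definition damped_deriv_poly :: "(real \<Rightarrow> real) \<Rightarrow> real \<Rightarrow> real" where
  "damped_deriv_poly Q y = y * y * (Q y - deriv Q y)"

lemma real_polynomial_function_damped_deriv_poly:
  "real_polynomial_function Q \<Longrightarrow> real_polynomial_function (damped_deriv_poly Q)"
proof -
  assume Q: "real_polynomial_function Q"
  have id: "real_polynomial_function (\<lambda>y::real. y)"
    by (rule real_polynomial_function.intros(1)[OF bounded_linear_ident])
  show ?thesis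
    unfolding damped_deriv_poly_def
    by (intro real_polynomial_function.intros(4)[OF real_polynomial_function.intros(4)[OF id id]]
        real_polynomial_function_diff Q real_polynomial_function_deriv(1))
qed

lemma has_real_derivative_damped_pos:
  assumes Q: "real_polynomial_function Q" and t: "t > 0"
  shows "(damped Q has_real_derivative damped (damped_deriv_poly Q) t) (at t)"
proof -
  note Q' = real_polynomial_function_deriv(2)[OF Q]
  have "((\<lambda>s. Q (1/s)) has_real_derivative deriv Q (1/t) * (- inverse (t^2))) (at t)"
    by (rule DERIV_chain2[OF Q'])
      (use t in \<open>auto intro!: derivative_eq_intros simp: power2_eq_square field_simps\<close>)
  moreover have "((\<lambda>s. exp (- (1/s))) has_real_derivative exp (- (1/t)) * inverse (t^2)) (at t)"
    by (rule DERIV_chain2[OF DERIV_exp])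
      (use t in \<open>auto intro!: derivative_eq_intros simp: power2_eq_square field_simps\<close>)
  ultimately have "((\<lambda>s. Q (1/s) * exp (- (1/s))) has_real_derivative
      deriv Q (1/t) * (- inverse (t^2)) * exp (- (1/t)) + exp (- (1/t)) * inverse (t^2) * Q (1/t)) (at t)"
    by (rule DERIV_mult)
  also have "deriv Q (1/t) * (- inverse (t^2)) * exp (- (1/t)) + exp (- (1/t)) * inverse (t^2) * Q (1/t)
      = damped (damped_deriv_poly Q) t"
    using t by (simp add: damped_def damped_deriv_poly_def power2_eq_square field_simps)
  finally show ?thesis
    by (rule has_field_derivative_transform_within_open[of _ _ _ "{0<..}"])
      (use t in \<open>auto simp: damped_def\<close>)
qed

lemma has_real_derivative_damped_neg:
  assumes t: "t < 0"
  shows "(damped Q has_real_derivative damped (damped_deriv_poly Q) t) (at t)"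
proof (rule has_field_derivative_transform_within_open[of "\<lambda>s. 0" _ t "{..<0}"])
  show "((\<lambda>s. 0) has_real_derivative damped (damped_deriv_poly Q) t) (at t)"
    using t by (simp add: damped_def)
qed (use t in \<open>auto simp: damped_def\<close>)

lemma has_real_derivative_damped_0:
  assumes Q: "real_polynomial_function Q"
  shows "(damped Q has_real_derivative damped (damped_deriv_poly Q) 0) (at 0)"
proof -
  have "real_polynomial_function (\<lambda>y. y * Q y)"
    by (rule real_polynomial_function.intros(4)[OF real_polynomial_function.intros(1)[OF bounded_linear_ident] Q])
  then have "((\<lambda>s. inverse s * Q (inverse s) / exp (inverse s)) \<longlongrightarrow> 0) (at_right 0)"
    by (rule filterlim_compose[OF polynomial_div_exp_tendsto_0 filterlim_inverse_at_top_right])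
  moreover have "\<forall>\<^sub>F s in at_right 0.
      inverse s * Q (inverse s) / exp (inverse s) = (damped Q s - damped Q 0) / (s - 0)"
    by (auto simp: eventually_at_right_less damped_def exp_minus field_simps eventually_at_filter)
  ultimately have right: "((\<lambda>s. (damped Q s - damped Q 0) / (s - 0)) \<longlongrightarrow> 0) (at_right 0)"
    by (simp add: tendsto_cong)
  have "\<forall>\<^sub>F s in at_left 0. 0 = (damped Q s - damped Q 0) / (s - 0)"
    by (auto simp: damped_def eventually_at_filter)
  from tendsto_cong[OF this, of 0]
  have "((\<lambda>s. (damped Q s - damped Q 0) / (s - 0)) \<longlongrightarrow> 0) (at_left 0)" by simp
  with right have "((\<lambda>s. (damped Q s - damped Q 0) / (s - 0)) \<longlongrightarrow> 0) (at 0)"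
    by (simp add: filterlim_at_split)
  then show ?thesis by (simp add: has_field_derivative_iff damped_def)
qed

lemma has_real_derivative_damped:
  "real_polynomial_function Q \<Longrightarrow> (damped Q has_real_derivative damped (damped_deriv_poly Q) t) (at t)"
  using has_real_derivative_damped_pos has_real_derivative_damped_neg has_real_derivative_damped_0
  by (cases t "0::real" rule: linorder_cases) auto

lemma has_derivative_damped_comp:
  assumes "real_polynomial_function Q" "r differentiable (at x)"
  shows "((\<lambda>x. damped Q (r x)) has_derivative
           (\<lambda>h. frechet_derivative r (at x) h * damped (damped_deriv_poly Q) (r x))) (at x)"
  using assms by (intro DERIV_compose_FDERIV[OF has_real_derivative_damped])
    (simp_all add: frechet_derivative_works)

lemma differentiable_upto_damped_comp:
  assumes "real_polynomial_function Q" "differentiable_upto n r"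
  shows "differentiable_upto n (\<lambda>x. damped Q (r x))"
  using assms
proof (induction n arbitrary: Q)
  case 0
  then show ?case
    by (auto simp: differentiable_upto_0 intro: differentiableI has_derivative_damped_comp)
next
  case (Suc n)
  have dr: "\<And>x. r differentiable (at x)" and Dr: "\<And>h. differentiable_upto n (dir_deriv r h)"
    using Suc.prems by (auto simp: differentiable_upto_Suc)
  note hd = has_derivative_damped_comp[OF Suc.prems(1) dr]
  have "dir_deriv (\<lambda>x. damped Q (r x)) h = (\<lambda>x. damped (damped_deriv_poly Q) (r x) * dir_deriv r h x)"
    for h
  proof
    fix x
    show "frechet_derivative (\<lambda>x. damped Q (r x)) (at x) h
        = damped (damped_deriv_poly Q) (r x) * dir_deriv r h x"
      using fun_cong[OF frechet_derivative_at[OF hd[of x]], of h] by (simp add: mult.commute)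
  qed
  moreover have "differentiable_upto n (\<lambda>x. damped (damped_deriv_poly Q) (r x) * dir_deriv r h x)" for h
    by (rule differentiable_upto_mult[OF Suc.IH[OF real_polynomial_function_damped_deriv_poly
          differentiable_upto_SucD] Dr]) (use Suc.prems in auto)
  ultimately show ?case using hd by (auto simp: differentiable_upto_Suc intro: differentiableI)
qed

definition bump :: "real \<Rightarrow> 'a::euclidean_space \<Rightarrow> real" where
  "bump R x = damped (\<lambda>_. 1) (R\<^sup>2 - x \<bullet> x)"

lemma differentiable_upto_const_minus_inner_self: "differentiable_upto n (\<lambda>x::'a::euclidean_space. c - x \<bullet> x)"
proof -
  have hd: "((\<lambda>x::'a. c - x \<bullet> x) has_derivative (\<lambda>h. - (2 * (x \<bullet> h)))) (at x)" for x
    by (auto intro!: derivative_eq_intros simp: inner_commute)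
  show ?thesis
  proof (cases n)
    case 0
    then show ?thesis using hd by (auto simp: differentiable_upto_0 differentiable_def)
  next
    case (Suc m)
    have "dir_deriv (\<lambda>x::'a. c - x \<bullet> x) h = (\<lambda>x. - (2 * (x \<bullet> h)))" for h
      using hd by (intro ext) (metis frechet_derivative_at)
    moreover have "bounded_linear (\<lambda>x::'a. - (2 * (x \<bullet> h)))" for h
      by (intro bounded_linear_minus bounded_linear_const_mult bounded_linear_inner_left)
    ultimately show ?thesis
      using Suc hd by (auto simp: differentiable_upto_Suc differentiable_def
          intro: differentiable_upto_bounded_linear)
  qed
qed

lemma differentiable_upto_bump: "differentiable_upto n (bump R)"
  unfolding bump_def
  by (intro differentiable_upto_damped_comp differentiable_upto_const_minus_inner_self
      real_polynomial_function.intros(2))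

lemma bump_eq_0: "0 \<le> R \<Longrightarrow> R < norm x \<Longrightarrow> bump R x = 0"
  using power_strict_mono[of R "norm x" 2] by (simp add: bump_def damped_def power2_norm_eq_inner)

lemma bump_pos: "norm x < R \<Longrightarrow> 0 < bump R x"
  using power_strict_mono[of "norm x" R 2] by (simp add: bump_def damped_def power2_norm_eq_inner)

lemma bump_nonneg: "0 \<le> bump R x" and bump_le_1: "bump R x \<le> 1"
  by (auto simp: bump_def damped_def)

lemma continuous_on_bump: "continuous_on UNIV (bump R)"
  using differentiable_upto_bump[of 0 R]
  by (auto simp: differentiable_upto_0 intro!: differentiable_imp_continuous_on differentiable_at_imp_differentiable_on)

lemma test_fun_polynomial_mult_bump:
  assumes "real_polynomial_function P" "0 \<le> R"
  shows "test_fun (\<lambda>x. P x * bump R x)"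
proof -
  have "smooth_fun (\<lambda>x. P x * bump R x)"
    unfolding smooth_fun_iff_differentiable_upto
    using assms(1) by (blast intro: differentiable_upto_mult differentiable_upto_polynomial
        differentiable_upto_bump)
  moreover have "\<forall>x. R < norm x \<longrightarrow> P x * bump R x = 0"
    using assms(2) by (simp add: bump_eq_0)
  ultimately show ?thesis unfolding test_fun_def by blast
qed

section \<open>Uniqueness of weak gradients\<close>

lemma borel_measurable_lborel_continuous:
  "continuous_on UNIV (f::'a::euclidean_space \<Rightarrow> real) \<Longrightarrow> f \<in> borel_measurable lborel"
  using borel_measurable_continuous_onI by (simp add: measurable_lborel1)

lemma eq_0_if_abs_le_eps_mult:
  fixes a J :: real
  assumes "\<And>e. 0 < e \<Longrightarrow> \<bar>a\<bar> \<le> e * J" and "0 \<le> J"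
  shows "a = 0"
proof -
  have "\<bar>a\<bar> \<le> 0 + e" if e: "0 < e" for e
  proof -
    have "\<bar>a\<bar> \<le> e / (J + 1) * J" using assms(1)[of "e / (J + 1)"] e assms(2) by simp
    also have "\<dots> \<le> e" using e assms(2) by (simp add: field_simps)
    finally show ?thesis by simp
  qed
  then show ?thesis using field_le_epsilon[of "\<bar>a\<bar>" 0] by simp
qed

lemma integrable_mult_continuous_cball_support:
  fixes w g :: "'a::euclidean_space \<Rightarrow> real"
  assumes w: "integrable lborel w" and supp: "\<And>x. x \<notin> cball 0 R \<Longrightarrow> w x = 0"
    and g: "continuous_on UNIV g"
  shows "integrable lborel (\<lambda>x. w x * g x)"
proof -
  have "compact (g ` cball 0 R)"
    by (rule compact_continuous_image[OF continuous_on_subset[OF g] compact_cball]) auto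
  then obtain B where B: "\<And>x. x \<in> cball 0 R \<Longrightarrow> \<bar>g x\<bar> \<le> B"
    using compact_imp_bounded bounded_iff by (metis imageI real_norm_def)
  show ?thesis
  proof (rule Bochner_Integration.integrable_bound[where f="\<lambda>x. B * w x"])
    show "integrable lborel (\<lambda>x. B * w x)" using w by simp
    show "(\<lambda>x. w x * g x) \<in> borel_measurable lborel"
      using borel_measurable_integrable[OF w] borel_measurable_lborel_continuous[OF g] by measurable
    have "\<bar>w x * g x\<bar> \<le> \<bar>B * w x\<bar>" for x
    proof (cases "x \<in> cball 0 R")
      case True
      then have "\<bar>g x\<bar> \<le> \<bar>B\<bar>" using B by fastforce
      then show ?thesis by (simp add: abs_mult mult_left_mono mult.commute[of "\<bar>B\<bar>"])
    qed (use supp in simp)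
    then show "AE x in lborel. norm (w x * g x) \<le> norm (B * w x)" by simp
  qed
qed

lemma integrable_mult_bump:
  fixes k :: "'a::euclidean_space \<Rightarrow> real"
  assumes k: "k \<in> borel_measurable lborel" and loc: "set_integrable lborel (cball 0 R) k" and R: "0 \<le> R"
  shows "integrable lborel (\<lambda>x. k x * bump R x)"
proof (rule Bochner_Integration.integrable_bound[where f="\<lambda>x. indicator (cball 0 R) x *\<^sub>R k x"])
  show "integrable lborel (\<lambda>x. indicator (cball 0 R) x *\<^sub>R k x)"
    using loc by (simp add: set_integrable_def)
  show "(\<lambda>x. k x * bump R x) \<in> borel_measurable lborel"
    using k borel_measurable_lborel_continuous[OF continuous_on_bump] by measurable
  have "\<bar>k x * bump R x\<bar> \<le> \<bar>indicator (cball 0 R) x *\<^sub>R k x\<bar>" for x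
    using bump_nonneg[of R x] bump_le_1[of R x] bump_eq_0[OF R, of x]
    by (cases "x \<in> cball 0 R") (auto simp: abs_mult mult_left_le)
  then show "AE x in lborel. norm (k x * bump R x) \<le> norm (indicator (cball 0 R) x *\<^sub>R k x)"
    by simp
qed

lemma abs_integral_mult_diff_le:
  fixes w f P :: "'a::euclidean_space \<Rightarrow> real"
  assumes w: "integrable lborel w" and supp: "\<And>x. x \<notin> cball 0 R \<Longrightarrow> w x = 0"
    and f: "continuous_on UNIV f" and P: "continuous_on UNIV P"
    and close: "\<And>x. x \<in> cball 0 R \<Longrightarrow> \<bar>f x - P x\<bar> \<le> e"
  shows "\<bar>(\<integral>x. w x * f x \<partial>lborel) - (\<integral>x. w x * P x \<partial>lborel)\<bar> \<le> e * (\<integral>x. \<bar>w x\<bar> \<partial>lborel)"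
proof -
  have i1: "integrable lborel (\<lambda>x. w x * f x)"
    by (rule integrable_mult_continuous_cball_support[OF w supp f])
  have i2: "integrable lborel (\<lambda>x. w x * P x)"
    by (rule integrable_mult_continuous_cball_support[OF w supp P])
  have "(\<integral>x. w x * f x \<partial>lborel) - (\<integral>x. w x * P x \<partial>lborel) = (\<integral>x. w x * (f x - P x) \<partial>lborel)"
    using i1 i2 by (simp add: right_diff_distrib)
  also have "\<bar>\<dots>\<bar> \<le> (\<integral>x. \<bar>w x * (f x - P x)\<bar> \<partial>lborel)"
    by (rule integral_abs_bound)
  also have "\<dots> \<le> (\<integral>x. e * \<bar>w x\<bar> \<partial>lborel)"
  proof (rule integral_mono)
    show "integrable lborel (\<lambda>x. \<bar>w x * (f x - P x)\<bar>)"
      using i1 i2 by (simp add: right_diff_distrib)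
    show "integrable lborel (\<lambda>x. e * \<bar>w x\<bar>)" using w by simp
    show "\<bar>w x * (f x - P x)\<bar> \<le> e * \<bar>w x\<bar>" for x
    proof (cases "x \<in> cball 0 R")
      case True
      then show ?thesis using close[of x] by (simp add: abs_mult mult_left_mono mult.commute[of e])
    qed (use supp in simp)
  qed
  finally show ?thesis by simp
qed

text \<open>By Stone--Weierstrass, polynomials approximate \<open>f\<close> uniformly on the support of the bump,
  and polynomials times the bump are test functions.\<close>
lemma integral_mult_bump_continuous_eq_0:
  fixes k :: "'a::euclidean_space \<Rightarrow> real"
  assumes k: "k \<in> borel_measurable lborel" and loc: "set_integrable lborel (cball 0 R) k" and R: "0 \<le> R"
    and orth: "\<And>\<phi>. test_fun \<phi> \<Longrightarrow> (\<integral>x. k x * \<phi> x \<partial>lborel) = 0"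
    and f: "continuous_on UNIV f"
  shows "(\<integral>x. k x * bump R x * f x \<partial>lborel) = 0"
proof -
  define w where "w = (\<lambda>x. k x * bump R x)"
  have w: "integrable lborel w" unfolding w_def by (rule integrable_mult_bump[OF k loc R])
  have supp: "w x = 0" if "x \<notin> cball 0 R" for x
    using that bump_eq_0[OF R, of x] by (simp add: w_def)
  have "\<bar>\<integral>x. w x * f x \<partial>lborel\<bar> \<le> e * (\<integral>x. \<bar>w x\<bar> \<partial>lborel)" if e: "0 < e" for e
  proof -
    obtain P where P: "polynomial_function P" and Pf: "\<forall>x\<in>cball 0 R. norm (f x - P x) < e"
      using Stone_Weierstrass_polynomial_function[OF compact_cball continuous_on_subset[OF f] e] by blast
    have "(\<integral>x. k x * (P x * bump R x) \<partial>lborel) = 0"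
      using P R by (intro orth test_fun_polynomial_mult_bump) (simp add: real_polynomial_function_eq)
    then have "(\<integral>x. w x * P x \<partial>lborel) = 0" unfolding w_def by (simp add: ac_simps)
    moreover have "continuous_on UNIV P" using P by (simp add: continuous_on_polymonial_function)
    ultimately show ?thesis
      using abs_integral_mult_diff_le[OF w supp f, where P=P and e=e] Pf by (simp add: less_imp_le)
  qed
  then show ?thesis unfolding w_def by (intro eq_0_if_abs_le_eps_mult) auto
qed

lemma tendsto_cutoff_indicator:
  assumes C: "closed C" "C \<noteq> {}"
  shows "(\<lambda>n. max 0 (1 - real n * infdist x C)) \<longlonglongrightarrow> indicator C x"
proof (cases "x \<in> C")
  case True
  then show ?thesis by (simp add: infdist_zero)
next
  case False
  then have d: "0 < infdist x C"
    using infdist_pos_not_in_closed[OF C] by blast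
  obtain N :: nat where N: "1 / infdist x C < N" using reals_Archimedean2 by blast
  have "max 0 (1 - real n * infdist x C) = 0" if "N \<le> n" for n
  proof -
    have "1 / infdist x C < real n" using N that by linarith
    then show ?thesis using d by (simp add: field_simps)
  qed
  then have "\<forall>\<^sub>F n in sequentially. max 0 (1 - real n * infdist x C) = 0"
    by (rule eventually_sequentiallyI)
  then show ?thesis using False by (simp add: tendsto_eventually)
qed

lemma integral_indicator_closed_eq_0:
  fixes w :: "'a::euclidean_space \<Rightarrow> real"
  assumes w: "integrable lborel w"
    and orth: "\<And>f. continuous_on UNIV f \<Longrightarrow> (\<integral>x. w x * f x \<partial>lborel) = 0"
    and C: "closed C"
  shows "(\<integral>x. w x * indicator C x \<partial>lborel) = 0"
proof (cases "C = {}")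
  case False
  define g where "g = (\<lambda>(n::nat) x. max 0 (1 - real n * infdist x C))"
  have cont: "continuous_on UNIV (g n)" for n
    unfolding g_def by (intro continuous_intros continuous_on_infdist continuous_on_id)
  have [measurable]: "w \<in> borel_measurable lborel" using w by simp
  have [measurable]: "C \<in> sets borel" using C by (rule borel_closed)
  have "(\<lambda>n. \<integral>x. w x * g n x \<partial>lborel) \<longlonglongrightarrow> (\<integral>x. w x * indicator C x \<partial>lborel)"
  proof (rule integral_dominated_convergence[where w="\<lambda>x. \<bar>w x\<bar>"])
    show "(\<lambda>x. w x * g n x) \<in> borel_measurable lborel" for n
      using borel_measurable_lborel_continuous[OF cont[of n]] by measurable
    show "AE x in lborel. (\<lambda>n. w x * g n x) \<longlonglongrightarrow> w x * indicator C x"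
      unfolding g_def by (intro AE_I2 tendsto_mult tendsto_const tendsto_cutoff_indicator C False)
    have "\<bar>g n x\<bar> \<le> 1" for n x using infdist_nonneg[of x C] by (simp add: g_def)
    then show "AE x in lborel. norm (w x * g n x) \<le> \<bar>w x\<bar>" for n
      by (intro AE_I2) (simp add: abs_mult mult_left_le)
  qed (use w in simp_all)
  moreover have "(\<lambda>n. \<integral>x. w x * g n x \<partial>lborel) = (\<lambda>n. 0)"
    by (intro ext orth cont)
  ultimately show ?thesis by (simp add: LIMSEQ_const_iff)
qed simp

lemma integrable_max_0_mult_indicator:
  fixes w :: "'a::euclidean_space \<Rightarrow> real"
  assumes w: "integrable lborel w" and A[measurable]: "A \<in> sets lborel"
  shows "integrable lborel (\<lambda>x. max 0 (w x) * indicator A x)"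
proof (rule Bochner_Integration.integrable_bound[where f=w])
  have [measurable]: "w \<in> borel_measurable lborel" using w by simp
  show "(\<lambda>x. max 0 (w x) * indicator A x) \<in> borel_measurable lborel" by measurable
qed (use w in \<open>auto simp: indicator_def\<close>)

lemma emeasure_density_max_0:
  fixes w :: "'a::euclidean_space \<Rightarrow> real"
  assumes w: "integrable lborel w" and A: "A \<in> sets lborel"
  shows "emeasure (density lborel (\<lambda>x. ennreal (max 0 (w x)))) A
           = ennreal (\<integral>x. max 0 (w x) * indicator A x \<partial>lborel)"
proof -
  have [measurable]: "w \<in> borel_measurable lborel" "A \<in> sets lborel" using w A by simp_all
  from integrable_max_0_mult_indicator[OF w A]
  have "(\<integral>\<^sup>+ x. ennreal (max 0 (w x) * indicator A x) \<partial>lborel)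
      = ennreal (\<integral>x. max 0 (w x) * indicator A x \<partial>lborel)"
    by (rule nn_integral_eq_integral) simp
  moreover have "(\<integral>\<^sup>+ x. ennreal (max 0 (w x)) * indicator A x \<partial>lborel)
      = (\<integral>\<^sup>+ x. ennreal (max 0 (w x) * indicator A x) \<partial>lborel)"
    by (intro nn_integral_cong) (simp add: indicator_def)
  ultimately show ?thesis using A by (simp add: emeasure_density)
qed

text \<open>The positive and negative parts of \<open>w\<close> define finite measures which agree on the
  \<open>\<inter>\<close>-stable generator of the Borel sets formed by the closed sets.\<close>
lemma AE_eq_0_if_orthogonal_continuous:
  fixes w :: "'a::euclidean_space \<Rightarrow> real"
  assumes w: "integrable lborel w"
    and orth: "\<And>f. continuous_on UNIV f \<Longrightarrow> (\<integral>x. w x * f x \<partial>lborel) = 0"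
  shows "AE x in lborel. w x = 0"
proof -
  have [measurable]: "w \<in> borel_measurable lborel" using w by simp
  have wn: "integrable lborel (\<lambda>x. - w x)" using w by simp
  have sets_eq: "sets lborel = sigma_sets (UNIV::'a set) (Collect closed)"
    by (simp add: borel_eq_closed)
  have "density lborel (\<lambda>x. ennreal (max 0 (w x))) = density lborel (\<lambda>x. ennreal (max 0 (- w x)))"
  proof (rule measure_eqI_generator_eq[where E="Collect closed" and \<Omega>=UNIV and A="\<lambda>_. UNIV"])
    fix X :: "'a set" assume "X \<in> Collect closed"
    then have X: "closed X" "X \<in> sets lborel" by simp_all
    have "(\<lambda>x. w x * indicator X x) = (\<lambda>x. max 0 (w x) * indicator X x - max 0 (- w x) * indicator X x)"
      by (auto simp: indicator_def max_def)
    moreover have "integrable lborel (\<lambda>x. max 0 (w x) * indicator X x)"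
      "integrable lborel (\<lambda>x. max 0 (- w x) * indicator X x)"
      using integrable_max_0_mult_indicator[OF w X(2)] integrable_max_0_mult_indicator[OF wn X(2)]
      by simp_all
    ultimately have "(\<integral>x. max 0 (w x) * indicator X x \<partial>lborel) = (\<integral>x. max 0 (- w x) * indicator X x \<partial>lborel)"
      using integral_indicator_closed_eq_0[OF w orth X(1)] by simp
    then show "emeasure (density lborel (\<lambda>x. ennreal (max 0 (w x)))) X
        = emeasure (density lborel (\<lambda>x. ennreal (max 0 (- w x)))) X"
      using emeasure_density_max_0[OF w X(2)] emeasure_density_max_0[OF wn X(2)] by simp
  next
    show "emeasure (density lborel (\<lambda>x. ennreal (max 0 (w x)))) UNIV \<noteq> \<infinity>" for i :: nat
      using emeasure_density_max_0[OF w, of UNIV] by simp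
    show "sets (density lborel (\<lambda>x. ennreal (max 0 (w x)))) = sigma_sets UNIV (Collect closed)"
      "sets (density lborel (\<lambda>x. ennreal (max 0 (- w x)))) = sigma_sets UNIV (Collect closed)"
      using sets_eq by simp_all
  qed (auto simp: Int_stable_def)
  then have "AE x in lborel. ennreal (max 0 (w x)) = ennreal (max 0 (- w x))"
    by (rule sigma_finite_measure.density_unique[OF sigma_finite_lborel, rotated 2]) simp_all
  then show ?thesis
    by (rule AE_mp) (intro AE_I2 impI, auto simp: ennreal_inj max_def split: if_splits)
qed

lemma AE_eq_0_if_orthogonal_test_funs:
  fixes k :: "'a::euclidean_space \<Rightarrow> real"
  assumes k: "k \<in> borel_measurable lborel" and loc: "\<And>r. set_integrable lborel (cball 0 r) k"
    and orth: "\<And>\<phi>. test_fun \<phi> \<Longrightarrow> (\<integral>x. k x * \<phi> x \<partial>lborel) = 0"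
  shows "AE x in lborel. k x = 0"
proof -
  have bump_AE: "AE x in lborel. k x * bump (real n) x = 0" for n :: nat
    using integral_mult_bump_continuous_eq_0[OF k loc _ orth]
    by (intro AE_eq_0_if_orthogonal_continuous integrable_mult_bump[OF k loc]) auto
  have "AE x in lborel. \<forall>n::nat. k x * bump (real n) x = 0"
    by (rule AE_all_countable[THEN iffD2]) (use bump_AE in blast)
  then show ?thesis
  proof (rule AE_mp[OF _ AE_I2], intro impI)
    fix x :: 'a assume "\<forall>n::nat. k x * bump (real n) x = 0"
    moreover obtain n :: nat where "0 < bump (real n) x"
      using reals_Archimedean2[of "norm x"] bump_pos by blast
    ultimately show "k x = 0" by (metis mult_eq_0_iff less_irrefl)
  qed
qed

lemma test_fun_continuous: "test_fun \<phi> \<Longrightarrow> continuous_on UNIV \<phi>"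
  unfolding test_fun_def smooth_fun_iff_differentiable_upto
  using differentiable_upto_0[of \<phi>]
  by (auto intro: differentiable_imp_continuous_on differentiable_at_imp_differentiable_on)

lemma test_fun_cball_support:
  assumes "test_fun \<phi>"
  obtains R where "0 \<le> R" "\<And>x. x \<notin> cball 0 R \<Longrightarrow> \<phi> x = 0"
proof -
  obtain R where "\<forall>x. R < norm x \<longrightarrow> \<phi> x = 0" using assms unfolding test_fun_def by blast
  then show ?thesis by (intro that[of "max R 0"]) auto
qed

lemma integrable_inner_mult_test_fun:
  fixes g :: "'a::euclidean_space \<Rightarrow> 'a"
  assumes g[measurable]: "g \<in> borel_measurable lborel"
    and loc: "\<And>r. set_integrable lborel (cball 0 r) (\<lambda>x. norm (g x))" and \<phi>: "test_fun \<phi>"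
  shows "integrable lborel (\<lambda>x. (g x \<bullet> i) * \<phi> x)"
proof -
  obtain R where R: "0 \<le> R" "\<And>x. x \<notin> cball 0 R \<Longrightarrow> \<phi> x = 0"
    using test_fun_cball_support[OF \<phi>] by blast
  define w where "w = (\<lambda>x. indicator (cball 0 R) x * (g x \<bullet> i))"
  have [measurable]: "cball 0 R \<in> sets borel" by simp
  have w: "integrable lborel w"
  proof (rule Bochner_Integration.integrable_bound[where f="\<lambda>x. indicator (cball 0 R) x *\<^sub>R (norm i * norm (g x))"])
    show "integrable lborel (\<lambda>x. indicator (cball 0 R) x *\<^sub>R (norm i * norm (g x)))"
      using loc[of R] unfolding set_integrable_def by (simp add: mult.left_commute[of _ "norm i"])
    show "AE x in lborel. norm (w x) \<le> norm (indicator (cball 0 R) x *\<^sub>R (norm i * norm (g x)))"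
      using Cauchy_Schwarz_ineq2[of "g _" i] by (intro AE_I2) (auto simp: w_def indicator_def mult.commute)
  qed (simp add: w_def)
  have "integrable lborel (\<lambda>x. w x * \<phi> x)"
    by (rule integrable_mult_continuous_cball_support[where R=R, OF w _ test_fun_continuous[OF \<phi>]])
      (simp add: w_def)
  moreover have "w x * \<phi> x = (g x \<bullet> i) * \<phi> x" for x
    using R(2)[of x] by (cases "x \<in> cball 0 R") (auto simp: w_def)
  ultimately show ?thesis by simp
qed

lemma set_integrable_inner_diff:
  fixes g1 g2 :: "'a::euclidean_space \<Rightarrow> 'a"
  assumes [measurable]: "g1 \<in> borel_measurable lborel" "g2 \<in> borel_measurable lborel"
    and l1: "set_integrable lborel (cball 0 r) (\<lambda>x. norm (g1 x))"
    and l2: "set_integrable lborel (cball 0 r) (\<lambda>x. norm (g2 x))" and i: "i \<in> Basis"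
  shows "set_integrable lborel (cball 0 r) (\<lambda>x. (g1 x - g2 x) \<bullet> i)"
  unfolding set_integrable_def
proof (rule Bochner_Integration.integrable_bound[where f="\<lambda>x. indicator (cball 0 r) x *\<^sub>R (norm (g1 x) + norm (g2 x))"])
  show "integrable lborel (\<lambda>x. indicator (cball 0 r) x *\<^sub>R (norm (g1 x) + norm (g2 x)))"
    using set_integral_add(1)[OF l1 l2] unfolding set_integrable_def .
  have "\<bar>(g1 x - g2 x) \<bullet> i\<bar> \<le> norm (g1 x) + norm (g2 x)" for x
    using Basis_le_norm[OF i, of "g1 x - g2 x"] norm_triangle_ineq4[of "g1 x" "g2 x"] by linarith
  then show "AE x in lborel. norm (indicator (cball 0 r) x *\<^sub>R ((g1 x - g2 x) \<bullet> i))
      \<le> norm (indicator (cball 0 r) x *\<^sub>R (norm (g1 x) + norm (g2 x)))"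
    by (intro AE_I2) (auto simp: indicator_def)
qed (use borel_closed[OF closed_cball] in measurable)

lemma weak_grad_unique:
  fixes u :: "'a::euclidean_space \<Rightarrow> real"
  assumes g1: "weak_grad u g1" and g2: "weak_grad u g2"
  shows "AE x in lborel. g1 x = g2 x"
proof -
  have [measurable]: "g1 \<in> borel_measurable lborel" "g2 \<in> borel_measurable lborel"
    and l1: "\<And>r. set_integrable lborel (cball 0 r) (\<lambda>x. norm (g1 x))"
    and l2: "\<And>r. set_integrable lborel (cball 0 r) (\<lambda>x. norm (g2 x))"
    using g1 g2 unfolding weak_grad_def by auto
  have "AE x in lborel. (g1 x - g2 x) \<bullet> i = 0" if i: "i \<in> Basis" for i
  proof (rule AE_eq_0_if_orthogonal_test_funs)
    fix \<phi> :: "'a \<Rightarrow> real" assume \<phi>: "test_fun \<phi>"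
    have "(\<integral>x. u x * frechet_derivative \<phi> (at x) i \<partial>lborel) = - (\<integral>x. (g1 x \<bullet> i) * \<phi> x \<partial>lborel)"
      "(\<integral>x. u x * frechet_derivative \<phi> (at x) i \<partial>lborel) = - (\<integral>x. (g2 x \<bullet> i) * \<phi> x \<partial>lborel)"
      using g1 g2 \<phi> i unfolding weak_grad_def by blast+
    then have "(\<integral>x. (g1 x \<bullet> i) * \<phi> x \<partial>lborel) = (\<integral>x. (g2 x \<bullet> i) * \<phi> x \<partial>lborel)"
      by simp
    moreover have "(\<integral>x. (g1 x - g2 x) \<bullet> i * \<phi> x \<partial>lborel)
        = (\<integral>x. (g1 x \<bullet> i) * \<phi> x \<partial>lborel) - (\<integral>x. (g2 x \<bullet> i) * \<phi> x \<partial>lborel)"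
      using integrable_inner_mult_test_fun[OF _ l1 \<phi>] integrable_inner_mult_test_fun[OF _ l2 \<phi>]
      by (simp add: inner_diff_left left_diff_distrib)
    ultimately show "(\<integral>x. (g1 x - g2 x) \<bullet> i * \<phi> x \<partial>lborel) = 0" by simp
  qed (use set_integrable_inner_diff[OF _ _ l1 l2 i] in simp_all)
  then have "AE x in lborel. \<forall>i\<in>Basis. (g1 x - g2 x) \<bullet> i = 0"
    by (subst AE_ball_countable) (auto intro: countable_finite)
  then show ?thesis
    by (rule AE_mp) (intro AE_I2 impI, simp add: euclidean_all_zero_iff)
qed

section \<open>Scaling in the variable exponent Sobolev space\<close>

lemma
  assumes "u \<in> sobW p"
  shows weak_grad_grad: "weak_grad u (grad p u)"
    and lp_mem_grad: "lp_mem p (\<lambda>x. norm (grad p u x))"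
proof -
  obtain g where "weak_grad u g \<and> lp_mem p (\<lambda>x. norm (g x))" using assms unfolding sobW_def by blast
  then have "weak_grad u (grad p u) \<and> lp_mem p (\<lambda>x. norm (grad p u x))"
    unfolding grad_def by (rule someI[where P="\<lambda>g. weak_grad u g \<and> lp_mem p (\<lambda>x. norm (g x))"])
  then show "weak_grad u (grad p u)" "lp_mem p (\<lambda>x. norm (grad p u x))" by auto
qed

lemma sobW_borel_measurable: "u \<in> sobW p \<Longrightarrow> u \<in> borel_measurable lborel"
  unfolding sobW_def lp_mem_def by auto

lemma grad_borel_measurable: "u \<in> sobW p \<Longrightarrow> grad p u \<in> borel_measurable lborel"
  using weak_grad_grad unfolding weak_grad_def by blast

lemma weak_grad_cmult:
  fixes u :: "'a::euclidean_space \<Rightarrow> real"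
  assumes "weak_grad u g"
  shows "weak_grad (\<lambda>x. c * u x) (\<lambda>x. c *\<^sub>R g x)"
proof -
  have [measurable]: "u \<in> borel_measurable lborel" "g \<in> borel_measurable lborel"
    and li: "\<And>r. set_integrable lborel (cball 0 r) u"
    and lg: "\<And>r. set_integrable lborel (cball 0 r) (\<lambda>x. norm (g x))"
    and ibp: "\<And>\<phi> i. test_fun \<phi> \<Longrightarrow> i \<in> Basis \<Longrightarrow>
        (\<integral>x. u x * frechet_derivative \<phi> (at x) i \<partial>lborel) = - (\<integral>x. (g x \<bullet> i) * \<phi> x \<partial>lborel)"
    using assms unfolding weak_grad_def by auto
  show ?thesis
    unfolding weak_grad_def
  proof (intro conjI allI impI)
    fix r :: real
    show "set_integrable lborel (cball 0 r) (\<lambda>x. c * u x)" using li[of r] by auto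
    have "set_integrable lborel (cball 0 r) (\<lambda>x. \<bar>c\<bar> * norm (g x))" using lg[of r] by auto
    then show "set_integrable lborel (cball 0 r) (\<lambda>x. norm (c *\<^sub>R g x))" by simp
  next
    fix \<phi> :: "'a \<Rightarrow> real" and i :: 'a assume "test_fun \<phi>" "i \<in> Basis"
    then show "(\<integral>x. c * u x * frechet_derivative \<phi> (at x) i \<partial>lborel)
        = - (\<integral>x. ((c *\<^sub>R g x) \<bullet> i) * \<phi> x \<partial>lborel)"
      using ibp by (simp add: mult.assoc)
  qed simp_all
qed

lemma lp_mem_cmult:
  fixes u :: "'a::euclidean_space \<Rightarrow> real"
  assumes u: "lp_mem h u" and h: "\<And>x. 0 \<le> h x" "\<And>x. h x \<le> H"
    and [measurable]: "h \<in> borel_measurable lborel"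
  shows "lp_mem h (\<lambda>x. c * u x)"
proof -
  have [measurable]: "u \<in> borel_measurable lborel"
    and fin: "(\<integral>\<^sup>+ x. ennreal (\<bar>u x\<bar> powr h x) \<partial>lborel) < \<infinity>"
    using u unfolding lp_mem_def by auto
  define B where "B = max 1 \<bar>c\<bar> powr H"
  have "\<bar>c * u x\<bar> powr h x \<le> B * \<bar>u x\<bar> powr h x" for x
  proof -
    have "\<bar>c\<bar> powr h x \<le> max 1 \<bar>c\<bar> powr h x" using h(1)[of x] by (intro powr_mono2) auto
    also have "\<dots> \<le> B" unfolding B_def using h(2)[of x] by (intro powr_mono) auto
    finally show ?thesis by (simp add: abs_mult powr_mult mult_right_mono)
  qed
  then have "(\<integral>\<^sup>+ x. ennreal (\<bar>c * u x\<bar> powr h x) \<partial>lborel)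
      \<le> (\<integral>\<^sup>+ x. ennreal B * ennreal (\<bar>u x\<bar> powr h x) \<partial>lborel)"
    by (intro nn_integral_mono) (simp add: B_def ennreal_mult[symmetric])
  also have "\<dots> = ennreal B * (\<integral>\<^sup>+ x. ennreal (\<bar>u x\<bar> powr h x) \<partial>lborel)"
    by (rule nn_integral_cmult) measurable
  also have "\<dots> < \<infinity>" using fin by (simp add: ennreal_mult_less_top)
  finally show ?thesis unfolding lp_mem_def by simp
qed

lemma lp_mem_integrable:
  assumes "lp_mem h u" and [measurable]: "h \<in> borel_measurable lborel"
  shows "integrable lborel (\<lambda>x. \<bar>u x\<bar> powr h x)"
proof (rule integrableI_bounded)
  have [measurable]: "u \<in> borel_measurable lborel" using assms unfolding lp_mem_def by auto
  show "(\<lambda>x. \<bar>u x\<bar> powr h x) \<in> borel_measurable lborel" by measurable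
  show "(\<integral>\<^sup>+ x. ennreal (norm (\<bar>u x\<bar> powr h x)) \<partial>lborel) < \<infinity>"
    using assms unfolding lp_mem_def by simp
qed

context
  fixes p :: "'a::euclidean_space \<Rightarrow> real" and P :: real
  assumes p: "\<And>x. 0 \<le> p x" "\<And>x. p x \<le> P" and [measurable]: "p \<in> borel_measurable lborel"
begin

lemma sobW_cmult:
  assumes u: "u \<in> sobW p"
  shows "(\<lambda>x. c * u x) \<in> sobW p"
proof -
  have "lp_mem p (\<lambda>x. \<bar>c\<bar> * norm (grad p u x))"
    by (rule lp_mem_cmult[OF lp_mem_grad[OF u] p]) measurable
  moreover have "weak_grad (\<lambda>x. c * u x) (\<lambda>x. c *\<^sub>R grad p u x)"
    by (rule weak_grad_cmult[OF weak_grad_grad[OF u]])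
  moreover have "lp_mem p (\<lambda>x. c * u x)"
    using u unfolding sobW_def by (auto intro: lp_mem_cmult[OF _ p])
  ultimately show ?thesis unfolding sobW_def by auto
qed

lemma grad_cmult_AE:
  assumes u: "u \<in> sobW p"
  shows "AE x in lborel. grad p (\<lambda>x. c * u x) x = c *\<^sub>R grad p u x"
  using weak_grad_grad[OF sobW_cmult[OF u]] weak_grad_cmult[OF weak_grad_grad[OF u]]
  by (rule weak_grad_unique)

end

section \<open>Differentiation under the integral sign along rays\<close>

lemma abs_exp_minus_one_minus_le_sq:
  fixes y :: real
  assumes "\<bar>y\<bar> \<le> 1"
  shows "\<bar>exp y - 1 - y\<bar> \<le> y\<^sup>2"
proof -
  have "exp y \<le> 1 + y + y\<^sup>2"
  proof (cases "0 \<le> y")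
    case True
    then show ?thesis using exp_bound[of y] assms by auto
  next
    case False
    define z where "z = - y"
    have z: "0 < z" "z \<le> 1" using False assms by (auto simp: z_def)
    have "exp y \<le> 1 / (1 + z)"
      using exp_ge_add_one_self[of z] z by (simp add: z_def exp_minus field_simps)
    also have "\<dots> \<le> 1 - z + z\<^sup>2"
    proof -
      have "(1 - z + z\<^sup>2) * (1 + z) = 1 + z ^ 3"
        by (simp add: algebra_simps power2_eq_square power3_eq_cube)
      then show ?thesis using z by (simp add: field_simps)
    qed
    finally show ?thesis by (simp add: z_def)
  qed
  then show ?thesis
    using exp_ge_add_one_self[of y] zero_le_power2[of y] unfolding abs_le_iff by linarith
qed

lemma abs_powr_minus_one_minus_le:
  fixes s e hi :: real
  assumes e: "0 < e" "e \<le> hi" and s: "\<bar>s - 1\<bar> \<le> 1/2" "\<bar>s - 1\<bar> * (2 * hi) \<le> 1"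
  shows "\<bar>s powr e - 1 - e * (s - 1)\<bar> \<le> (4 * hi\<^sup>2 + 2 * hi) * (s - 1)\<^sup>2"
proof -
  define t where "t = ln s"
  have s0: "0 < s" using s(1) by linarith
  have lt: "\<bar>t - (s - 1)\<bar> \<le> 2 * (s - 1)\<^sup>2"
    using abs_ln_one_plus_x_minus_x_bound[of "s - 1"] s unfolding t_def by simp
  have "(s - 1)\<^sup>2 \<le> \<bar>s - 1\<bar> * (1/2)"
    using s(1) mult_left_mono[OF s(1), of "\<bar>s - 1\<bar>"] by (simp add: power2_eq_square abs_mult[symmetric])
  then have "\<bar>t\<bar> \<le> 2 * \<bar>s - 1\<bar>" using lt abs_triangle_ineq[of "t - (s - 1)" "s - 1"] by simp
  then have "e * \<bar>t\<bar> \<le> hi * (2 * \<bar>s - 1\<bar>)" using e by (intro mult_mono) auto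
  then have et: "\<bar>e * t\<bar> \<le> 2 * hi * \<bar>s - 1\<bar>" using e by (simp add: abs_mult)
  then have "\<bar>e * t\<bar> \<le> 1" using s(2) by (simp add: mult.commute)
  then have "\<bar>exp (e * t) - 1 - e * t\<bar> \<le> (e * t)\<^sup>2"
    by (rule abs_exp_minus_one_minus_le_sq)
  also have "\<dots> \<le> (2 * hi * \<bar>s - 1\<bar>)\<^sup>2"
    using power_mono[OF et, of 2] by simp
  finally have "\<bar>exp (e * t) - 1 - e * t\<bar> \<le> (2 * hi * \<bar>s - 1\<bar>)\<^sup>2" .
  moreover have "\<bar>e * (t - (s - 1))\<bar> \<le> hi * (2 * (s - 1)\<^sup>2)"
    using e lt by (simp add: abs_mult) (intro mult_mono, auto)
  moreover have "s powr e - 1 - e * (s - 1) = (exp (e * t) - 1 - e * t) + e * (t - (s - 1))"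
    using s0 by (simp add: powr_def t_def mult.commute algebra_simps)
  ultimately show ?thesis
    using abs_triangle_ineq[of "exp (e * t) - 1 - e * t" "e * (t - (s - 1))"]
    by (simp add: power_mult_distrib algebra_simps)
qed

lemma has_real_derivative_if_quadratic_remainder:
  fixes F :: "real \<Rightarrow> real"
  assumes \<delta>: "0 < \<delta>" and rem: "\<And>s. \<bar>s - a\<bar> < \<delta> \<Longrightarrow> \<bar>F s - F a - (s - a) * D\<bar> \<le> C * (s - a)\<^sup>2"
  shows "(F has_real_derivative D) (at a)"
proof -
  have "norm ((F s - F a) / (s - a) - D) \<le> norm (s - a) * C" if "\<bar>s - a\<bar> < \<delta>" "s \<noteq> a" for s
  proof -
    have "\<bar>F s - F a - (s - a) * D\<bar> \<le> \<bar>s - a\<bar> * (\<bar>s - a\<bar> * C)"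
      using rem[OF that(1)] by (simp add: power2_eq_square mult_ac)
    then have "\<bar>F s - F a - (s - a) * D\<bar> / \<bar>s - a\<bar> \<le> \<bar>s - a\<bar> * (\<bar>s - a\<bar> * C) / \<bar>s - a\<bar>"
      by (rule divide_right_mono) simp
    moreover have "(F s - F a) / (s - a) - D = (F s - F a - (s - a) * D) / (s - a)"
      using that(2) by (simp add: field_simps)
    ultimately show ?thesis using that(2) by simp
  qed
  then have ev: "\<forall>\<^sub>F s in at a. norm ((F s - F a) / (s - a) - D) \<le> norm (s - a) * C"
    unfolding eventually_at dist_real_def using \<delta> by blast
  have "((\<lambda>s. s - a) \<longlongrightarrow> 0) (at a)"
    by (intro tendsto_eq_intros) auto
  then have "((\<lambda>s. (F s - F a) / (s - a) - D) \<longlongrightarrow> 0) (at a)"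
    by (rule tendsto_0_le[OF _ ev])
  then have "((\<lambda>s. (F s - F a) / (s - a)) \<longlongrightarrow> D) (at a)"
    by (simp add: LIM_zero_iff)
  then show ?thesis by (simp add: has_field_derivative_iff)
qed

context
  fixes e w :: "'a::euclidean_space \<Rightarrow> real" and lo hi :: real
  assumes w[measurable]: "w \<in> borel_measurable lborel" and e[measurable]: "e \<in> borel_measurable lborel"
    and w_nonneg: "\<And>x. 0 \<le> w x" and lo: "0 < lo" "\<And>x. lo \<le> e x" and hi: "\<And>x. e x \<le> hi"
begin

lemma integrable_powr_mult_iff:
  assumes s: "0 < s"
  shows "integrable lborel (\<lambda>x. s powr e x * w x) \<longleftrightarrow> integrable lborel w"
proof
  define m where "m = min 1 (s powr hi)"
  have m: "0 < m" using s by (simp add: m_def)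
  assume i: "integrable lborel (\<lambda>x. s powr e x * w x)"
  have "m \<le> s powr e x" for x
  proof (cases "1 \<le> s")
    case True
    then show ?thesis using lo(1) lo(2)[of x] by (simp add: m_def ge_one_powr_ge_zero min.coboundedI1)
  next
    case False
    then show ?thesis using s hi[of x] by (simp add: m_def powr_mono' min.coboundedI2)
  qed
  then have "m * w x \<le> s powr e x * w x" for x
    using w_nonneg by (rule mult_right_mono)
  then have "w x \<le> (1 / m) * (s powr e x * w x)" for x
    using m by (simp add: field_simps)
  then have "AE x in lborel. norm (w x) \<le> norm ((1 / m) * (s powr e x * w x))"
    using w_nonneg by (intro AE_I2) (metis abs_of_nonneg order_trans real_norm_def)
  then show "integrable lborel w"
    by (rule Bochner_Integration.integrable_bound[OF integrable_mult_right[OF i] w])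
next
  assume i: "integrable lborel w"
  have "s powr e x * w x \<le> max 1 s powr hi * w x" for x
  proof (rule mult_right_mono[OF _ w_nonneg])
    have "s powr e x \<le> max 1 s powr e x"
      using s lo(1) lo(2)[of x] by (intro powr_mono2) auto
    also have "\<dots> \<le> max 1 s powr hi" using hi[of x] by (intro powr_mono) auto
    finally show "s powr e x \<le> max 1 s powr hi" .
  qed
  then have bound: "AE x in lborel. norm (s powr e x * w x) \<le> norm (max 1 s powr hi * w x)"
    using w_nonneg by (intro AE_I2) simp
  show "integrable lborel (\<lambda>x. s powr e x * w x)"
    by (rule Bochner_Integration.integrable_bound[OF integrable_mult_right[OF i] _ bound]) measurable
qed

lemma integrable_exponent_mult_iff: "integrable lborel (\<lambda>x. e x * w x) \<longleftrightarrow> integrable lborel w"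
proof
  assume i: "integrable lborel (\<lambda>x. e x * w x)"
  have "lo * w x \<le> e x * w x" for x
    using lo(2) w_nonneg by (rule mult_right_mono)
  then have "w x \<le> (1 / lo) * (e x * w x)" for x
    using lo(1) by (simp add: field_simps)
  then have "AE x in lborel. norm (w x) \<le> norm ((1 / lo) * (e x * w x))"
    using w_nonneg by (intro AE_I2) (metis abs_of_nonneg order_trans real_norm_def)
  then show "integrable lborel w"
    by (rule Bochner_Integration.integrable_bound[OF integrable_mult_right[OF i] w])
next
  assume i: "integrable lborel w"
  have "e x * w x \<le> hi * w x" for x
    using hi w_nonneg by (rule mult_right_mono)
  then have bound: "AE x in lborel. norm (e x * w x) \<le> norm (hi * w x)"
    using w_nonneg lo by (intro AE_I2) (metis abs_of_nonneg mult_nonneg_nonneg order_trans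
        real_norm_def less_imp_le)
  show "integrable lborel (\<lambda>x. e x * w x)"
    by (rule Bochner_Integration.integrable_bound[OF integrable_mult_right[OF i] _ bound]) measurable
qed

lemma abs_integral_powr_mult_taylor_le:
  assumes wi: "integrable lborel w" and s: "\<bar>s - 1\<bar> \<le> 1/2" "\<bar>s - 1\<bar> * (2 * hi) \<le> 1"
  shows "\<bar>(\<integral>x. s powr e x * w x \<partial>lborel) - (\<integral>x. w x \<partial>lborel) - (s - 1) * (\<integral>x. e x * w x \<partial>lborel)\<bar>
           \<le> (s - 1)\<^sup>2 * ((4 * hi\<^sup>2 + 2 * hi) * (\<integral>x. w x \<partial>lborel))"
proof -
  have "0 < s" using s(1) by linarith
  then have i1: "integrable lborel (\<lambda>x. s powr e x * w x)"
    using wi by (simp add: integrable_powr_mult_iff)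
  have i2: "integrable lborel (\<lambda>x. (s - 1) * (e x * w x))"
    using wi by (simp add: integrable_exponent_mult_iff)
  have eq: "(\<lambda>x. s powr e x * w x - w x - (s - 1) * (e x * w x))
      = (\<lambda>x. (s powr e x - 1 - e x * (s - 1)) * w x)"
    by (auto simp: algebra_simps)
  have i: "integrable lborel (\<lambda>x. (s powr e x - 1 - e x * (s - 1)) * w x)"
    unfolding eq[symmetric] using i1 i2 wi by (intro Bochner_Integration.integrable_diff)
  have "(\<integral>x. s powr e x * w x \<partial>lborel) - (\<integral>x. w x \<partial>lborel) - (s - 1) * (\<integral>x. e x * w x \<partial>lborel)
      = (\<integral>x. (s powr e x - 1 - e x * (s - 1)) * w x \<partial>lborel)"
    unfolding eq[symmetric] using i1 i2 wi by simp
  also have "\<bar>\<dots>\<bar> \<le> (\<integral>x. \<bar>(s powr e x - 1 - e x * (s - 1)) * w x\<bar> \<partial>lborel)"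
    by (rule integral_abs_bound)
  also have "\<dots> \<le> (\<integral>x. (s - 1)\<^sup>2 * ((4 * hi\<^sup>2 + 2 * hi) * w x) \<partial>lborel)"
  proof (rule integral_mono)
    show "integrable lborel (\<lambda>x. \<bar>(s powr e x - 1 - e x * (s - 1)) * w x\<bar>)"
      using i by (rule integrable_abs)
    show "integrable lborel (\<lambda>x. (s - 1)\<^sup>2 * ((4 * hi\<^sup>2 + 2 * hi) * w x))"
      using wi by simp
    fix x
    have "\<bar>s powr e x - 1 - e x * (s - 1)\<bar> * w x \<le> (4 * hi\<^sup>2 + 2 * hi) * (s - 1)\<^sup>2 * w x"
      using abs_powr_minus_one_minus_le[OF order_less_le_trans[OF lo(1) lo(2)] hi s] w_nonneg[of x]
      by (rule mult_right_mono)
    also have "\<dots> = (s - 1)\<^sup>2 * ((4 * hi\<^sup>2 + 2 * hi) * w x)" by (simp only: mult_ac)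
    finally show "\<bar>(s powr e x - 1 - e x * (s - 1)) * w x\<bar> \<le> (s - 1)\<^sup>2 * ((4 * hi\<^sup>2 + 2 * hi) * w x)"
      using w_nonneg[of x] by (simp only: abs_mult abs_of_nonneg)
  qed
  finally show ?thesis by simp
qed

lemma has_real_derivative_integral_powr_mult:
  "((\<lambda>s. \<integral>x. s powr e x * w x \<partial>lborel) has_real_derivative (\<integral>x. e x * w x \<partial>lborel)) (at 1)"
proof (cases "integrable lborel w")
  case True
  have hi0: "0 < hi" using lo(1) lo(2)[of undefined] hi[of undefined] by linarith
  show ?thesis
  proof (rule has_real_derivative_if_quadratic_remainder)
    show "0 < min (1/2) (1 / (2 * hi))" using hi0 by simp
    fix s :: real assume "\<bar>s - 1\<bar> < min (1/2) (1 / (2 * hi))"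
    then have "\<bar>s - 1\<bar> \<le> 1/2" "\<bar>s - 1\<bar> * (2 * hi) \<le> 1"
      using hi0 by (simp_all add: less_divide_eq)
    from abs_integral_powr_mult_taylor_le[OF True this]
    show "\<bar>(\<integral>x. s powr e x * w x \<partial>lborel) - (\<integral>x. 1 powr e x * w x \<partial>lborel) - (s - 1) * (\<integral>x. e x * w x \<partial>lborel)\<bar>
        \<le> ((4 * hi\<^sup>2 + 2 * hi) * (\<integral>x. w x \<partial>lborel)) * (s - 1)\<^sup>2"
      by (simp add: mult.commute)
  qed
next
  case False
  text \<open>Both sides are junk values \<open>0\<close> of the Bochner integral.\<close>
  have eq0: "0 = (\<integral>x. s powr e x * w x \<partial>lborel)" if "s \<in> {0<..}" for s
    using False that by (simp add: integrable_powr_mult_iff not_integrable_integral_eq)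
  have "((\<lambda>s. \<integral>x. s powr e x * w x \<partial>lborel) has_real_derivative 0) (at 1)"
    by (rule has_field_derivative_transform_within_open[of "\<lambda>s. 0" _ 1 "{0<..}", OF _ _ _ eq0])
      simp_all
  moreover have "(\<integral>x. e x * w x \<partial>lborel) = 0"
    using False by (simp add: integrable_exponent_mult_iff not_integrable_integral_eq)
  ultimately show ?thesis by simp
qed

end

lemma integral_divide_bounds:
  fixes w e :: "'a::euclidean_space \<Rightarrow> real"
  assumes [measurable]: "w \<in> borel_measurable lborel" "e \<in> borel_measurable lborel"
    and w_nonneg: "\<And>x. 0 \<le> w x" and lo: "0 < lo" "\<And>x. lo \<le> e x" and hi: "\<And>x. e x \<le> hi"
  shows "(\<integral>x. w x \<partial>lborel) / hi \<le> (\<integral>x. w x / e x \<partial>lborel)"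
    and "(\<integral>x. w x / e x \<partial>lborel) \<le> (\<integral>x. w x \<partial>lborel) / lo"
proof -
  have ne: "e x \<noteq> 0" for x using lo(1) lo(2)[of x] by linarith
  have g_nonneg: "0 \<le> w x / e x" for x using w_nonneg[of x] lo(1) lo(2)[of x] by simp
  have "integrable lborel (\<lambda>x. e x * (w x / e x)) \<longleftrightarrow> integrable lborel (\<lambda>x. w x / e x)"
    by (rule integrable_exponent_mult_iff[where lo=lo and hi=hi], measurable, measurable)
      (use g_nonneg lo hi in auto)
  then have iff: "integrable lborel (\<lambda>x. w x / e x) \<longleftrightarrow> integrable lborel w"
    using ne by simp
  have "(\<integral>x. w x / hi \<partial>lborel) \<le> (\<integral>x. w x / e x \<partial>lborel) \<and>
      (\<integral>x. w x / e x \<partial>lborel) \<le> (\<integral>x. w x / lo \<partial>lborel)"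
  proof (cases "integrable lborel w")
    case True
    have "w x / hi \<le> w x / e x" "w x / e x \<le> w x / lo" for x
      using w_nonneg[of x] lo(1) lo(2)[of x] hi[of x] by (auto intro!: frac_le)
    then show ?thesis
      using True iff by (intro conjI integral_mono) auto
  qed (use iff in \<open>simp add: not_integrable_integral_eq\<close>)
  then show "(\<integral>x. w x \<partial>lborel) / hi \<le> (\<integral>x. w x / e x \<partial>lborel)"
    "(\<integral>x. w x / e x \<partial>lborel) \<le> (\<integral>x. w x \<partial>lborel) / lo"
    by simp_all
qed

section \<open>Luxemburg gauges\<close>

definition lux_modular :: "('a::euclidean_space \<Rightarrow> real) \<Rightarrow> ('a \<Rightarrow> real) \<Rightarrow> real \<Rightarrow> ennreal" where
  "lux_modular e A s = (\<integral>\<^sup>+ x. ennreal (s powr (- e x) * A x) \<partial>lborel)"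

definition luxemburg :: "('a::euclidean_space \<Rightarrow> real) \<Rightarrow> ('a \<Rightarrow> real) \<Rightarrow> real" where
  "luxemburg e A = Inf {s. 0 < s \<and> lux_modular e A s \<le> 1}"

lemma divide_powr_eq_powr_minus_mult:
  fixes a s e :: real
  shows "0 < s \<Longrightarrow> (a / s) powr e = s powr (- e) * a powr e"
  by (simp add: powr_divide powr_minus_divide)

lemma lux_eq_luxemburg: "lux h u = luxemburg h (\<lambda>x. \<bar>u x\<bar> powr h x)"
  unfolding lux_def luxemburg_def lux_modular_def
  by (intro arg_cong[where f=Inf] Collect_cong conj_cong refl arg_cong2[where f="(\<le>)"]
      nn_integral_cong) (simp add: divide_powr_eq_powr_minus_mult)

lemma wnorm_eq_luxemburg:
  "wnorm V p u = luxemburg p (\<lambda>x. norm (grad p u x) powr p x + V x * \<bar>u x\<bar> powr p x)"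
  unfolding wnorm_def luxemburg_def lux_modular_def
  by (intro arg_cong[where f=Inf] Collect_cong conj_cong refl arg_cong2[where f="(\<le>)"]
      nn_integral_cong) (simp add: divide_powr_eq_powr_minus_mult algebra_simps)

context
  fixes e A :: "'a::euclidean_space \<Rightarrow> real" and a b :: real
  assumes e[measurable]: "e \<in> borel_measurable lborel"
    and A_integrable: "integrable lborel A" and A_nonneg: "\<And>x. 0 \<le> A x"
    and a: "1 \<le> a" "\<And>x. a \<le> e x" and b: "\<And>x. e x \<le> b"
begin

lemma exponent_nonneg: "0 \<le> e x"
  using a(1) a(2)[of x] by linarith

lemma integral_nonneg_A: "0 \<le> (\<integral>x. A x \<partial>lborel)"
  using A_nonneg by simp

lemma lux_modular_antimono: "0 < s \<Longrightarrow> s \<le> s' \<Longrightarrow> lux_modular e A s' \<le> lux_modular e A s"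
  unfolding lux_modular_def
  using exponent_nonneg A_nonneg by (intro nn_integral_mono ennreal_leI mult_right_mono powr_mono2') auto

lemma lux_modular_le:
  assumes "0 < s" and c: "\<And>x. s powr (- e x) \<le> c"
  shows "lux_modular e A s \<le> ennreal (c * (\<integral>x. A x \<partial>lborel))"
proof -
  have [measurable]: "A \<in> borel_measurable lborel" using A_integrable by simp
  have "0 \<le> c" using c[of undefined] by (meson order_trans powr_ge_zero)
  have "lux_modular e A s \<le> (\<integral>\<^sup>+ x. ennreal (c * A x) \<partial>lborel)"
    unfolding lux_modular_def using c A_nonneg by (intro nn_integral_mono ennreal_leI mult_right_mono) auto
  also have "\<dots> = ennreal (\<integral>x. c * A x \<partial>lborel)"
    using A_integrable A_nonneg \<open>0 \<le> c\<close> by (intro nn_integral_eq_integral) auto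
  finally show ?thesis by simp
qed

lemma lux_modular_1_plus_integral_le_1: "lux_modular e A (1 + (\<integral>x. A x \<partial>lborel)) \<le> 1"
proof -
  define s where "s = 1 + (\<integral>x. A x \<partial>lborel)"
  have s: "1 \<le> s" using integral_nonneg_A by (simp add: s_def)
  have "s powr (- e x) \<le> s powr (- 1)" for x
    using s a(1) a(2)[of x] by (intro powr_mono) auto
  then have "lux_modular e A s \<le> ennreal (s powr (- 1) * (\<integral>x. A x \<partial>lborel))"
    using s by (intro lux_modular_le) auto
  moreover have "s powr (- 1) * (\<integral>x. A x \<partial>lborel) \<le> 1"
    using s by (simp add: powr_minus_divide s_def)
  ultimately show ?thesis unfolding s_def by (metis ennreal_leI ennreal_1 order_trans)
qed

lemma luxemburg_le: "0 < s \<Longrightarrow> lux_modular e A s \<le> 1 \<Longrightarrow> luxemburg e A \<le> s"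
  unfolding luxemburg_def by (rule cInf_lower) (auto intro: bdd_belowI[of _ 0])

lemma luxemburg_le_1_plus_integral: "luxemburg e A \<le> 1 + (\<integral>x. A x \<partial>lborel)"
proof (rule luxemburg_le)
  show "0 < 1 + (\<integral>x. A x \<partial>lborel)" using integral_nonneg_A by linarith
qed (rule lux_modular_1_plus_integral_le_1)

lemma luxemburg_nonneg: "0 \<le> luxemburg e A"
  unfolding luxemburg_def
proof (rule cInf_greatest)
  show "{s. 0 < s \<and> lux_modular e A s \<le> 1} \<noteq> {}"
    using lux_modular_1_plus_integral_le_1 integral_nonneg_A
    by (intro ex_in_conv[THEN iffD1] exI[of _ "1 + (\<integral>x. A x \<partial>lborel)"]) simp
qed simp

lemma lux_modular_le_1_if_luxemburg_less:
  assumes "luxemburg e A < s"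
  shows "lux_modular e A s \<le> 1"
proof -
  have "{s. 0 < s \<and> lux_modular e A s \<le> 1} \<noteq> {}"
    using lux_modular_1_plus_integral_le_1 integral_nonneg_A
    by (intro ex_in_conv[THEN iffD1] exI[of _ "1 + (\<integral>x. A x \<partial>lborel)"]) simp
  from cInf_lessD[OF this assms[unfolded luxemburg_def]]
  obtain s' where "0 < s'" "lux_modular e A s' \<le> 1" "s' < s" by auto
  then show ?thesis using lux_modular_antimono[of s' s] by simp
qed

lemma luxemburg_le_integral_powr:
  assumes le1: "(\<integral>x. A x \<partial>lborel) \<le> 1"
  shows "luxemburg e A \<le> (\<integral>x. A x \<partial>lborel) powr (1 / b)"
proof -
  define J where "J = (\<integral>x. A x \<partial>lborel)"
  have J: "0 \<le> J" "J \<le> 1" using A_nonneg le1 by (simp_all add: J_def)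
  have b0: "0 < b" using a(1) a(2)[of undefined] b[of undefined] by linarith
  have small: "luxemburg e A \<le> s" if s: "0 < s" "s \<le> 1" "J \<le> s powr b" for s
  proof (rule luxemburg_le)
    have "s powr (- e x) \<le> s powr (- b)" for x
      using s b[of x] by (intro powr_mono') auto
    then have "lux_modular e A s \<le> ennreal (s powr (- b) * J)"
      unfolding J_def using s by (intro lux_modular_le) auto
    moreover have "s powr (- b) * J \<le> 1"
      using s by (simp add: powr_minus_divide field_simps)
    ultimately show "lux_modular e A s \<le> 1" by (metis ennreal_leI ennreal_1 order_trans)
  qed (use s in simp)
  show ?thesis
  proof (cases "J = 0")
    case False
    then have "0 < J" using J(1) by simp
    then have "luxemburg e A \<le> J powr (1 / b)"
      using J b0 by (intro small) (simp_all add: powr_powr powr_le1)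
    then show ?thesis by (simp add: J_def)
  next
    case True
    have "luxemburg e A \<le> 0 + \<epsilon>" if "0 < \<epsilon>" for \<epsilon>
    proof -
      have "luxemburg e A \<le> min \<epsilon> 1" using that True by (intro small) auto
      then show ?thesis by simp
    qed
    then have "luxemburg e A \<le> 0" by (rule field_le_epsilon)
    then show ?thesis using True by (simp add: J_def)
  qed
qed

lemma integral_powr_le_luxemburg:
  assumes less1: "luxemburg e A < 1"
  shows "(\<integral>x. A x \<partial>lborel) powr (1 / a) \<le> luxemburg e A"
proof (rule ccontr)
  define J where "J = (\<integral>x. A x \<partial>lborel)"
  have [measurable]: "A \<in> borel_measurable lborel" using A_integrable by simp
  have J0: "0 \<le> J" using A_nonneg by (simp add: J_def)
  have J_le: "J \<le> s powr a" if s: "luxemburg e A < s" "s < 1" for s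
  proof -
    have s0: "0 < s" using s(1) luxemburg_nonneg by linarith
    have "ennreal J = (\<integral>\<^sup>+ x. ennreal (A x) \<partial>lborel)"
      unfolding J_def using A_integrable A_nonneg by (simp add: nn_integral_eq_integral)
    also have "\<dots> \<le> (\<integral>\<^sup>+ x. ennreal (s powr a) * ennreal (s powr (- e x) * A x) \<partial>lborel)"
    proof (intro nn_integral_mono)
      fix x
      have "s powr e x \<le> s powr a" using s0 s(2) a(2)[of x] by (intro powr_mono') auto
      then have "A x \<le> s powr a * (s powr (- e x) * A x)"
        using A_nonneg[of x] s0 mult_right_mono[of "s powr e x" "s powr a" "s powr (- e x) * A x"]
        by (simp add: powr_minus_divide)
      then show "ennreal (A x) \<le> ennreal (s powr a) * ennreal (s powr (- e x) * A x)"
        using A_nonneg[of x] by (simp add: ennreal_mult[symmetric] ennreal_leI)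
    qed
    also have "\<dots> = ennreal (s powr a) * lux_modular e A s"
      unfolding lux_modular_def by (rule nn_integral_cmult) measurable
    also have "\<dots> \<le> ennreal (s powr a)"
      using lux_modular_le_1_if_luxemburg_less[OF s(1)] by (simp add: mult_left_le)
    finally show ?thesis by (simp add: ennreal_le_iff)
  qed
  assume "\<not> J powr (1 / a) \<le> luxemburg e A"
  then have lt: "luxemburg e A < J powr (1 / a)" unfolding J_def by simp
  define s where "s = (luxemburg e A + min 1 (J powr (1 / a))) / 2"
  have s: "luxemburg e A < s" "s < 1" "s < J powr (1 / a)" using lt less1 by (auto simp: s_def)
  have "s powr a < (J powr (1 / a)) powr a"
    using s luxemburg_nonneg a by (intro powr_less_mono2) auto
  also have "\<dots> = J" using J0 a by (simp add: powr_powr)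
  finally show False using J_le[OF s(1,2)] by simp
qed

end

section \<open>The functional along rays\<close>

definition sob_modular :: "('a::euclidean_space \<Rightarrow> real) \<Rightarrow> ('a \<Rightarrow> real) \<Rightarrow> ('a \<Rightarrow> real) \<Rightarrow> real" where
  "sob_modular V p u = (\<integral>x. norm (grad p u x) powr p x + V x * \<bar>u x\<bar> powr p x \<partial>lborel)"

lemma integral_cmult_powr_abs:
  fixes s :: real
  assumes "0 < s"
  shows "(\<integral>x. \<bar>s * v x\<bar> powr h x / h x \<partial>lborel) = (\<integral>x. s powr h x * (\<bar>v x\<bar> powr h x / h x) \<partial>lborel)"
  using assms by (intro Bochner_Integration.integral_cong) (auto simp: abs_mult powr_mult)

locale variable_exponent_setting =
  fixes p q V :: "'a::euclidean_space \<Rightarrow> real" and p_lo p_hi q_lo ps_hi V_hi :: real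
  assumes p_measurable[measurable]: "p \<in> borel_measurable lborel"
    and q_measurable[measurable]: "q \<in> borel_measurable lborel"
    and V_measurable[measurable]: "V \<in> borel_measurable lborel"
    and V_nonneg: "\<And>x. 0 \<le> V x" and V_le: "\<And>x. V x \<le> V_hi"
    and p_lo: "1 \<le> p_lo" "\<And>x. p_lo \<le> p x" and p_hi: "\<And>x. p x \<le> p_hi"
    and p_hi_less_q_lo: "p_hi < q_lo"
    and q_bounds: "\<And>x. q_lo \<le> q x" "\<And>x. q x \<le> ps_hi"
    and pstar_bounds: "\<And>x. q_lo \<le> pstar p x" "\<And>x. pstar p x \<le> ps_hi"
begin

lemma pstar_measurable[measurable]: "pstar p \<in> borel_measurable lborel"
  unfolding pstar_def[abs_def] by measurable

lemma p_pos: "0 < p x" using p_lo(1) p_lo(2)[of x] by linarith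
lemma p_hi_pos: "0 < p_hi" using p_pos[of undefined] p_hi[of undefined] by linarith
lemma q_lo_pos: "0 < q_lo" using p_hi_pos p_hi_less_q_lo by linarith

lemma integrable_sob_integrand:
  assumes u: "u \<in> sobW p"
  shows "integrable lborel (\<lambda>x. norm (grad p u x) powr p x + V x * \<bar>u x\<bar> powr p x)"
proof -
  have [measurable]: "u \<in> borel_measurable lborel" by (rule sobW_borel_measurable[OF u])
  have iu: "integrable lborel (\<lambda>x. \<bar>u x\<bar> powr p x)"
    using u unfolding sobW_def by (auto intro: lp_mem_integrable)
  have "norm (V x * \<bar>u x\<bar> powr p x) \<le> norm (V_hi * \<bar>u x\<bar> powr p x)" for x
    using V_le[of x] V_nonneg[of x] by (simp add: abs_mult mult_right_mono)
  then have "integrable lborel (\<lambda>x. V x * \<bar>u x\<bar> powr p x)"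
    by (intro Bochner_Integration.integrable_bound[OF integrable_mult_right[OF iu] _ AE_I2]) measurable
  moreover have "integrable lborel (\<lambda>x. norm (grad p u x) powr p x)"
    using lp_mem_integrable[OF lp_mem_grad[OF u]] by simp
  ultimately show ?thesis by simp
qed

lemma sob_integrand_nonneg: "0 \<le> norm (grad p u x) powr p x + V x * \<bar>u x\<bar> powr p x"
  using V_nonneg[of x] by simp

lemma sob_modular_nonneg: "0 \<le> sob_modular V p u"
  unfolding sob_modular_def using sob_integrand_nonneg by simp

context
  fixes u assumes u: "u \<in> sobW p"
begin

lemmas luxemburg_sob =
  luxemburg_nonneg[OF p_measurable integrable_sob_integrand[OF u] sob_integrand_nonneg p_lo(1) p_lo(2) p_hi]
  luxemburg_le_1_plus_integral[OF p_measurable integrable_sob_integrand[OF u] sob_integrand_nonneg p_lo(1) p_lo(2) p_hi]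
  luxemburg_le_integral_powr[OF p_measurable integrable_sob_integrand[OF u] sob_integrand_nonneg p_lo(1) p_lo(2) p_hi]
  lux_modular_le_1_if_luxemburg_less[OF p_measurable integrable_sob_integrand[OF u] sob_integrand_nonneg p_lo(1) p_lo(2) p_hi]

lemma wnorm_nonneg: "0 \<le> wnorm V p u"
  unfolding wnorm_eq_luxemburg by (rule luxemburg_sob(1))

lemma wnorm_le_1_plus_sob_modular: "wnorm V p u \<le> 1 + sob_modular V p u"
  unfolding wnorm_eq_luxemburg sob_modular_def by (rule luxemburg_sob(2))

lemma wnorm_le_sob_modular_powr:
  "sob_modular V p u \<le> 1 \<Longrightarrow> wnorm V p u \<le> sob_modular V p u powr (1 / p_hi)"
  unfolding wnorm_eq_luxemburg sob_modular_def by (rule luxemburg_sob(3))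

lemma lux_modular_le_1_if_wnorm_less:
  "wnorm V p u < s \<Longrightarrow> lux_modular p (\<lambda>x. norm (grad p u x) powr p x + V x * \<bar>u x\<bar> powr p x) s \<le> 1"
  unfolding wnorm_eq_luxemburg by (rule luxemburg_sob(4))

end

lemmas sobW_cmult_p = sobW_cmult[OF less_imp_le[OF p_pos] p_hi p_measurable]
  and grad_cmult_AE_p = grad_cmult_AE[OF less_imp_le[OF p_pos] p_hi p_measurable]

text \<open>Normalising \<open>u\<close> by \<open>\<parallel>u\<parallel> + 1\<close> rather than \<open>\<parallel>u\<parallel>\<close> avoids a case split at \<open>u = 0\<close>.\<close>
lemma wnorm_normalised_le_1:
  assumes u: "u \<in> sobW p"
  shows "wnorm V p (\<lambda>x. (1 / (wnorm V p u + 1)) * u x) \<le> 1"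
proof -
  define W where "W = wnorm V p u"
  define c where "c = 1 / (W + 1)"
  have c0: "0 < c" using wnorm_nonneg[OF u] by (simp add: c_def W_def)
  have cu: "(\<lambda>x. c * u x) \<in> sobW p" by (rule sobW_cmult_p[OF u])
  have "lux_modular p (\<lambda>x. norm (grad p (\<lambda>x. c * u x) x) powr p x + V x * \<bar>c * u x\<bar> powr p x) 1
      = lux_modular p (\<lambda>x. norm (grad p u x) powr p x + V x * \<bar>u x\<bar> powr p x) (W + 1)"
    unfolding lux_modular_def
  proof (rule nn_integral_cong_AE)
    show "AE x in lborel. ennreal (1 powr - p x * (norm (grad p (\<lambda>x. c * u x) x) powr p x + V x * \<bar>c * u x\<bar> powr p x))
        = ennreal ((W + 1) powr - p x * (norm (grad p u x) powr p x + V x * \<bar>u x\<bar> powr p x))"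
      using grad_cmult_AE_p[OF u, of c]
      by eventually_elim (use c0 in \<open>simp add: c_def abs_mult powr_mult powr_divide powr_minus_divide field_simps\<close>)
  qed
  also have "\<dots> \<le> 1" using lux_modular_le_1_if_wnorm_less[OF u] by (simp add: W_def)
  finally show ?thesis
    unfolding wnorm_eq_luxemburg c_def W_def
    using luxemburg_le[OF p_measurable integrable_sob_integrand[OF cu] sob_integrand_nonneg p_lo p_hi]
    by (simp add: wnorm_eq_luxemburg[symmetric] c_def W_def)
qed

lemma I_inf_cmult:
  assumes v: "v \<in> sobW p" and s: "0 < s"
  shows "I_inf \<mu> p q V (\<lambda>x. s * v x) =
     (\<integral>x. s powr p x * ((1 / p x) * (norm (grad p v x) powr p x + V x * \<bar>v x\<bar> powr p x)) \<partial>lborel)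
     - \<mu> * (\<integral>x. s powr q x * (\<bar>v x\<bar> powr q x / q x) \<partial>lborel)
     - (\<integral>x. s powr pstar p x * (\<bar>v x\<bar> powr pstar p x / pstar p x) \<partial>lborel)"
proof -
  have [measurable]: "v \<in> borel_measurable lborel" "grad p v \<in> borel_measurable lborel"
    "grad p (\<lambda>x. s * v x) \<in> borel_measurable lborel"
    using sobW_borel_measurable[OF v] grad_borel_measurable[OF v]
      grad_borel_measurable[OF sobW_cmult_p[OF v]] by auto
  have "(\<integral>x. (1 / p x) * (norm (grad p (\<lambda>x. s * v x) x) powr p x + V x * \<bar>s * v x\<bar> powr p x) \<partial>lborel)
     = (\<integral>x. s powr p x * ((1 / p x) * (norm (grad p v x) powr p x + V x * \<bar>v x\<bar> powr p x)) \<partial>lborel)"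
  proof (rule integral_cong_AE)
    show "AE x in lborel. (1 / p x) * (norm (grad p (\<lambda>x. s * v x) x) powr p x + V x * \<bar>s * v x\<bar> powr p x) =
        s powr p x * ((1 / p x) * (norm (grad p v x) powr p x + V x * \<bar>v x\<bar> powr p x))"
      using grad_cmult_AE_p[OF v, of s]
      by eventually_elim (use s in \<open>simp add: abs_mult powr_mult algebra_simps\<close>)
  qed measurable
  then show ?thesis unfolding I_inf_def integral_cmult_powr_abs[OF s] by simp
qed

lemma has_real_derivative_I_inf_ray:
  assumes v: "v \<in> sobW p"
  shows "((\<lambda>s. I_inf \<mu> p q V (\<lambda>x. s * v x)) has_real_derivative
     sob_modular V p v - \<mu> * (\<integral>x. \<bar>v x\<bar> powr q x \<partial>lborel) - (\<integral>x. \<bar>v x\<bar> powr pstar p x \<partial>lborel)) (at 1)"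
proof -
  have [measurable]: "v \<in> borel_measurable lborel" "grad p v \<in> borel_measurable lborel"
    using sobW_borel_measurable[OF v] grad_borel_measurable[OF v] by auto
  have d1: "((\<lambda>s. \<integral>x. s powr p x * ((1 / p x) * (norm (grad p v x) powr p x + V x * \<bar>v x\<bar> powr p x)) \<partial>lborel)
      has_real_derivative sob_modular V p v) (at 1)"
  proof -
    have "(\<integral>x. p x * ((1 / p x) * (norm (grad p v x) powr p x + V x * \<bar>v x\<bar> powr p x)) \<partial>lborel)
        = sob_modular V p v"
      unfolding sob_modular_def using p_pos
      by (intro Bochner_Integration.integral_cong) (auto simp: less_imp_neq[symmetric])
    moreover have "((\<lambda>s. \<integral>x. s powr p x * ((1 / p x) * (norm (grad p v x) powr p x + V x * \<bar>v x\<bar> powr p x)) \<partial>lborel)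
      has_real_derivative (\<integral>x. p x * ((1 / p x) * (norm (grad p v x) powr p x + V x * \<bar>v x\<bar> powr p x)) \<partial>lborel)) (at 1)"
      by (rule has_real_derivative_integral_powr_mult[where lo=p_lo and hi=p_hi])
        (use p_lo p_hi p_pos sob_integrand_nonneg in \<open>auto intro: divide_nonneg_pos\<close>)
    ultimately show ?thesis by simp
  qed
  have d2: "((\<lambda>s. \<integral>x. s powr h x * (\<bar>v x\<bar> powr h x / h x) \<partial>lborel)
      has_real_derivative (\<integral>x. \<bar>v x\<bar> powr h x \<partial>lborel)) (at 1)"
    if [measurable]: "h \<in> borel_measurable lborel" and h: "\<And>x. q_lo \<le> h x" "\<And>x. h x \<le> ps_hi" for h
  proof -
    have h0: "0 < h x" for x using q_lo_pos h(1)[of x] by linarith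
    then have "(\<integral>x. h x * (\<bar>v x\<bar> powr h x / h x) \<partial>lborel) = (\<integral>x. \<bar>v x\<bar> powr h x \<partial>lborel)"
      by (intro Bochner_Integration.integral_cong) (auto simp: less_imp_neq[symmetric])
    moreover have "((\<lambda>s. \<integral>x. s powr h x * (\<bar>v x\<bar> powr h x / h x) \<partial>lborel)
      has_real_derivative (\<integral>x. h x * (\<bar>v x\<bar> powr h x / h x) \<partial>lborel)) (at 1)"
      by (rule has_real_derivative_integral_powr_mult[where lo=q_lo and hi=ps_hi])
        (use q_lo_pos h h0 in \<open>auto intro: divide_nonneg_pos\<close>)
    ultimately show ?thesis by simp
  qed
  have "((\<lambda>s. (\<integral>x. s powr p x * ((1 / p x) * (norm (grad p v x) powr p x + V x * \<bar>v x\<bar> powr p x)) \<partial>lborel)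
     - \<mu> * (\<integral>x. s powr q x * (\<bar>v x\<bar> powr q x / q x) \<partial>lborel)
     - (\<integral>x. s powr pstar p x * (\<bar>v x\<bar> powr pstar p x / pstar p x) \<partial>lborel)) has_real_derivative
     sob_modular V p v - \<mu> * (\<integral>x. \<bar>v x\<bar> powr q x \<partial>lborel) - (\<integral>x. \<bar>v x\<bar> powr pstar p x \<partial>lborel)) (at 1)"
    by (intro DERIV_diff DERIV_cmult d1 d2) (use q_bounds pstar_bounds in auto)
  then show ?thesis
    by (rule has_field_derivative_transform_within_open[where S="{0<..}"])
      (simp_all add: I_inf_cmult[OF v])
qed

lemma I_inf_deriv_cmult_self:
  assumes v: "v \<in> sobW p"
  shows "I_inf_deriv \<mu> p q V v (\<lambda>x. c * v x) =
     c * (sob_modular V p v - \<mu> * (\<integral>x. \<bar>v x\<bar> powr q x \<partial>lborel) - (\<integral>x. \<bar>v x\<bar> powr pstar p x \<partial>lborel))"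
proof -
  have "(\<lambda>x. v x + t * (c * v x)) = (\<lambda>x. (1 + t * c) * v x)" for t by (auto simp: algebra_simps)
  moreover have "((\<lambda>t. I_inf \<mu> p q V (\<lambda>x. (1 + t * c) * v x)) has_real_derivative
      (sob_modular V p v - \<mu> * (\<integral>x. \<bar>v x\<bar> powr q x \<partial>lborel) - (\<integral>x. \<bar>v x\<bar> powr pstar p x \<partial>lborel)) * c) (at 0)"
    using has_real_derivative_I_inf_ray[OF v, of \<mu>]
    by (intro DERIV_chain2[where f="\<lambda>s. I_inf \<mu> p q V (\<lambda>x. s * v x)" and g="\<lambda>t. 1 + t * c"])
      (auto intro!: derivative_eq_intros)
  ultimately show ?thesis unfolding I_inf_deriv_def by (simp add: DERIV_imp_deriv mult.commute)
qed

lemma sob_modular_le_functional_minus_deriv: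
  assumes v: "v \<in> sobW p" and mu: "0 < \<mu>"
  shows "(1 / p_hi - 1 / q_lo) * sob_modular V p v \<le> I_inf \<mu> p q V v
     - (sob_modular V p v - \<mu> * (\<integral>x. \<bar>v x\<bar> powr q x \<partial>lborel) - (\<integral>x. \<bar>v x\<bar> powr pstar p x \<partial>lborel)) / q_lo"
proof -
  have [measurable]: "v \<in> borel_measurable lborel" "grad p v \<in> borel_measurable lborel"
    using sobW_borel_measurable[OF v] grad_borel_measurable[OF v] by auto
  define A where "A = (\<lambda>x. norm (grad p v x) powr p x + V x * \<bar>v x\<bar> powr p x)"
  have A_int: "integrable lborel A" unfolding A_def by (rule integrable_sob_integrand[OF v])
  have A_nonneg: "0 \<le> A x" for x unfolding A_def by (rule sob_integrand_nonneg)
  have T1: "(\<integral>x. A x \<partial>lborel) / p_hi \<le> (\<integral>x. A x / p x \<partial>lborel)"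
    by (rule integral_divide_bounds(1)[where lo=p_lo]) (use p_lo p_hi A_nonneg in \<open>auto simp: A_def\<close>)
  have T2: "(\<integral>x. \<bar>v x\<bar> powr h x / h x \<partial>lborel) \<le> (\<integral>x. \<bar>v x\<bar> powr h x \<partial>lborel) / q_lo"
    if [measurable]: "h \<in> borel_measurable lborel" and h: "\<And>x. q_lo \<le> h x" "\<And>x. h x \<le> ps_hi" for h
    by (rule integral_divide_bounds(2)[where hi=ps_hi]) (use q_lo_pos h in auto)
  have Tq: "\<mu> * (\<integral>x. \<bar>v x\<bar> powr q x / q x \<partial>lborel) \<le> \<mu> * ((\<integral>x. \<bar>v x\<bar> powr q x \<partial>lborel) / q_lo)"
    using mu q_bounds by (intro mult_left_mono T2) auto
  have Tp: "(\<integral>x. \<bar>v x\<bar> powr pstar p x / pstar p x \<partial>lborel) \<le> (\<integral>x. \<bar>v x\<bar> powr pstar p x \<partial>lborel) / q_lo"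
    using pstar_bounds by (intro T2) auto
  have I_eq: "I_inf \<mu> p q V v = (\<integral>x. A x / p x \<partial>lborel)
      - \<mu> * (\<integral>x. \<bar>v x\<bar> powr q x / q x \<partial>lborel) - (\<integral>x. \<bar>v x\<bar> powr pstar p x / pstar p x \<partial>lborel)"
    unfolding I_inf_def A_def by simp
  have \<rho>_eq: "sob_modular V p v = (\<integral>x. A x \<partial>lborel)" unfolding sob_modular_def A_def ..
  have div_eq: "(\<integral>x. A x \<partial>lborel - \<mu> * (\<integral>x. \<bar>v x\<bar> powr q x \<partial>lborel)
      - (\<integral>x. \<bar>v x\<bar> powr pstar p x \<partial>lborel)) / q_lo = (\<integral>x. A x \<partial>lborel) / q_lo
      - \<mu> * ((\<integral>x. \<bar>v x\<bar> powr q x \<partial>lborel) / q_lo) - (\<integral>x. \<bar>v x\<bar> powr pstar p x \<partial>lborel) / q_lo"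
    by (simp add: diff_divide_distrib)
  have "(1 / p_hi - 1 / q_lo) * (\<integral>x. A x \<partial>lborel) = (\<integral>x. A x \<partial>lborel) / p_hi - (\<integral>x. A x \<partial>lborel) / q_lo"
    by (simp add: left_diff_distrib)
  then show ?thesis unfolding I_eq \<rho>_eq div_eq using T1 Tq Tp by linarith
qed

lemma sob_modular_bound_if_deriv_small:
  assumes v: "v \<in> sobW p" and mu: "0 < \<mu>"
    and small: "\<forall>\<phi>\<in>sobW p. wnorm V p \<phi> \<le> 1 \<longrightarrow> \<bar>I_inf_deriv \<mu> p q V v \<phi>\<bar> \<le> \<epsilon> * q_lo"
  shows "(1 / p_hi - 1 / q_lo) * sob_modular V p v \<le> I_inf \<mu> p q V v + (2 + sob_modular V p v) * \<epsilon>"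
proof -
  define W where "W = wnorm V p v"
  define D where "D = sob_modular V p v - \<mu> * (\<integral>x. \<bar>v x\<bar> powr q x \<partial>lborel)
     - (\<integral>x. \<bar>v x\<bar> powr pstar p x \<partial>lborel)"
  have W0: "0 \<le> W" unfolding W_def by (rule wnorm_nonneg[OF v])
  have "\<bar>I_inf_deriv \<mu> p q V v (\<lambda>x. 1 / (W + 1) * v x)\<bar> \<le> \<epsilon> * q_lo"
    using small sobW_cmult_p[OF v] wnorm_normalised_le_1[OF v] unfolding W_def by blast
  then have bound: "\<bar>1 / (W + 1) * D\<bar> \<le> \<epsilon> * q_lo"
    unfolding I_inf_deriv_cmult_self[OF v] D_def .
  then have eps: "0 \<le> \<epsilon> * q_lo" by (meson abs_ge_zero order_trans)
  from bound have "\<bar>D\<bar> \<le> (W + 1) * (\<epsilon> * q_lo)" using W0 by (simp add: abs_mult field_simps)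
  also have "\<dots> \<le> (2 + sob_modular V p v) * (\<epsilon> * q_lo)"
    using wnorm_le_1_plus_sob_modular[OF v] eps unfolding W_def by (intro mult_right_mono) auto
  finally have "- D / q_lo \<le> (2 + sob_modular V p v) * \<epsilon>"
    using q_lo_pos by (simp add: field_simps)
  then show ?thesis
    using sob_modular_le_functional_minus_deriv[OF v mu] unfolding D_def by linarith
qed

lemma sob_modular_powr_bound_if_small:
  assumes u: "u \<in> sobW p" and K: "1 \<le> K" and sobolev: "lux (pstar p) u \<le> K * wnorm V p u"
    and small: "sob_modular V p u < 1 / K powr p_hi"
  shows "(\<integral>x. \<bar>u x\<bar> powr pstar p x \<partial>lborel) powr (1 / Inf (range (pstar p)))
           \<le> K * sob_modular V p u powr (1 / p_hi)"
proof -
  define \<rho> where "\<rho> = sob_modular V p u"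
  define X where "X = (\<integral>x. \<bar>u x\<bar> powr pstar p x \<partial>lborel)"
  have [measurable]: "u \<in> borel_measurable lborel" by (rule sobW_borel_measurable[OF u])
  have \<rho>0: "0 \<le> \<rho>" unfolding \<rho>_def by (rule sob_modular_nonneg)
  have "1 / K powr p_hi \<le> 1" using K p_hi_pos by (simp add: ge_one_powr_ge_zero)
  then have \<rho>1: "\<rho> \<le> 1" using small unfolding \<rho>_def by linarith
  have "\<rho> powr (1 / p_hi) < (1 / K powr p_hi) powr (1 / p_hi)"
    using small \<rho>0 p_hi_pos unfolding \<rho>_def by (intro powr_less_mono2) auto
  also have "\<dots> = 1 / K" using K p_hi_pos by (simp add: powr_divide powr_powr)
  finally have \<rho>K: "K * \<rho> powr (1 / p_hi) < 1" using K by (simp add: field_simps)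
  have lux_le: "lux (pstar p) u \<le> K * \<rho> powr (1 / p_hi)"
    using order_trans[OF sobolev mult_left_mono[OF wnorm_le_sob_modular_powr[OF u \<rho>1[unfolded \<rho>_def]], of K]] K
    unfolding \<rho>_def by simp
  show ?thesis
  proof (cases "integrable lborel (\<lambda>x. \<bar>u x\<bar> powr pstar p x)")
    case True
    have bdd: "bdd_below (range (pstar p))" using pstar_bounds(1) by (auto intro: bdd_belowI[of _ q_lo])
    have "1 \<le> q_lo"
      using p_lo(1) p_lo(2)[of undefined] p_hi[of undefined] p_hi_less_q_lo by linarith
    then have "1 \<le> Inf (range (pstar p))"
      using pstar_bounds(1) by (intro cInf_greatest) (auto intro: order_trans)
    then have "X powr (1 / Inf (range (pstar p))) \<le> lux (pstar p) u"
      unfolding X_def lux_eq_luxemburg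
      using True lux_le \<rho>K pstar_bounds(2) bdd cInf_lower[OF rangeI bdd]
      by (intro integral_powr_le_luxemburg[where b=ps_hi]) (simp_all add: lux_eq_luxemburg)
    then show ?thesis using lux_le unfolding X_def \<rho>_def by linarith
  qed (use K \<rho>0 in \<open>simp add: not_integrable_integral_eq \<rho>_def\<close>)
qed

end

section \<open>Palais--Smale sequences below the threshold\<close>

lemma less_if_linear_bound:
  fixes \<nu> T I \<epsilon> \<rho> :: real
  assumes "\<epsilon> \<le> \<nu>" "I + (2 + T) * \<epsilon> < \<nu> * T" "\<nu> * \<rho> \<le> I + (2 + \<rho>) * \<epsilon>"
  shows "\<rho> < T"
proof (rule ccontr)
  assume "\<not> \<rho> < T"
  then have "0 \<le> (\<rho> - T) * (\<nu> - \<epsilon>)" using assms(1) by simp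
  then show False using assms(2,3) by (simp add: algebra_simps)
qed

lemma (in variable_exponent_setting) PS_sequence_critical_bound:
  fixes \<mu> K d :: real and v :: "nat \<Rightarrow> 'a \<Rightarrow> real"
  assumes mu: "0 < \<mu>" and K: "1 \<le> K"
    and sobolev: "\<forall>u \<in> sobW p. lux (pstar p) u \<le> K * wnorm V p u"
    and vW: "\<forall>n. v n \<in> sobW p"
    and PS1: "(\<lambda>n. I_inf \<mu> p q V (v n)) \<longlonglongrightarrow> d"
    and PS2: "\<forall>\<epsilon>>0. eventually (\<lambda>n. \<forall>\<phi>\<in>sobW p. wnorm V p \<phi> \<le> 1 \<longrightarrow>
                 \<bar>I_inf_deriv \<mu> p q V (v n) \<phi>\<bar> \<le> \<epsilon>) sequentially"
    and d: "d < (1 / p_hi - 1 / q_lo) * (1 / K powr p_hi)"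
  shows "\<exists>n0. \<forall>n\<ge>n0. (\<integral>x. \<bar>v n x\<bar> powr pstar p x \<partial>lborel) powr (1 / Inf (range (pstar p)))
           \<le> K * sob_modular V p (v n) powr (1 / p_hi)"
proof -
  define \<nu> where "\<nu> = 1 / p_hi - 1 / q_lo"
  define T where "T = 1 / K powr p_hi"
  define g where "g = \<nu> * T - d"
  define \<epsilon> where "\<epsilon> = min \<nu> (g / (2 * (2 + T)))"
  have \<nu>: "0 < \<nu>" unfolding \<nu>_def using p_hi_pos p_hi_less_q_lo by (simp add: frac_less2)
  have T: "0 < T" using K by (simp add: T_def)
  have g: "0 < g" using d unfolding g_def \<nu>_def T_def by simp
  have \<epsilon>: "0 < \<epsilon>" "\<epsilon> \<le> \<nu>" using \<nu> g T by (simp_all add: \<epsilon>_def)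
  have "(2 + T) * \<epsilon> \<le> (2 + T) * (g / (2 * (2 + T)))"
    using T by (intro mult_left_mono) (simp_all add: \<epsilon>_def)
  also have "\<dots> = g / 2" using T by (simp add: field_simps)
  finally have \<epsilon>_g: "(2 + T) * \<epsilon> \<le> g / 2" .
  have "\<forall>\<^sub>F n in sequentially. I_inf \<mu> p q V (v n) < d + g / 2"
    using PS1 g by (intro order_tendstoD(2)) auto
  moreover have "\<forall>\<^sub>F n in sequentially. \<forall>\<phi>\<in>sobW p. wnorm V p \<phi> \<le> 1 \<longrightarrow>
      \<bar>I_inf_deriv \<mu> p q V (v n) \<phi>\<bar> \<le> \<epsilon> * q_lo"
    using PS2 \<epsilon>(1) q_lo_pos by simp
  ultimately have "\<forall>\<^sub>F n in sequentially. sob_modular V p (v n) < T"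
  proof eventually_elim
    case (elim n)
    show ?case
    proof (rule less_if_linear_bound[OF \<epsilon>(2)])
      show "I_inf \<mu> p q V (v n) + (2 + T) * \<epsilon> < \<nu> * T"
        using elim(1) \<epsilon>_g g_def by linarith
      show "\<nu> * sob_modular V p (v n) \<le> I_inf \<mu> p q V (v n) + (2 + sob_modular V p (v n)) * \<epsilon>"
        unfolding \<nu>_def using sob_modular_bound_if_deriv_small[OF vW[rule_format] mu elim(2)] .
    qed
  qed
  then have "\<forall>\<^sub>F n in sequentially. (\<integral>x. \<bar>v n x\<bar> powr pstar p x \<partial>lborel) powr (1 / Inf (range (pstar p)))
      \<le> K * sob_modular V p (v n) powr (1 / p_hi)"
    by eventually_elim
      (use sobolev vW K in \<open>auto intro!: sob_modular_powr_bound_if_small simp: T_def\<close>)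
  then show ?thesis unfolding eventually_sequentially .
qed

lemma Z_periodic_continuous_bounded:
  fixes f :: "'a::euclidean_space \<Rightarrow> real"
  assumes c: "continuous_on UNIV f" and per: "Z_periodic f"
  obtains B where "\<And>x. f x \<le> B"
proof -
  obtain B where B: "\<And>y. y \<in> cbox 0 One \<Longrightarrow> \<bar>f y\<bar> \<le> B"
    using compact_imp_bounded[OF compact_continuous_image[OF continuous_on_subset[OF c] compact_cbox]]
    by (metis bounded_iff imageI real_norm_def subset_UNIV)
  have "f x \<le> B" for x
  proof -
    define z :: 'a where "z = (\<Sum>i\<in>Basis. of_int \<lfloor>x \<bullet> i\<rfloor> *\<^sub>R i)"
    have zi: "z \<bullet> i = of_int \<lfloor>x \<bullet> i\<rfloor>" if "i \<in> Basis" for i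
      unfolding z_def using that by (simp add: inner_sum_left inner_Basis if_distrib cong: if_cong)
    then have "\<forall>i\<in>Basis. z \<bullet> i \<in> \<int>" by simp
    then have "f ((x - z) + z) = f (x - z)" using per unfolding Z_periodic_def by blast
    moreover have "x - z \<in> cbox 0 One"
      unfolding mem_box using zi
      by (auto simp: inner_diff_left) (metis of_int_floor_le add.commute floor_correct less_eq_real_def
          diff_le_eq real_of_int_floor_add_one_gt)+
    ultimately show ?thesis using B by fastforce
  qed
  then show ?thesis by (rule that)
qed

lemma variable_exponent_setting_if_periodic:
  fixes p q V :: "'a::euclidean_space \<Rightarrow> real"
  assumes dim: "2 \<le> DIM('a)"
    and p_lip: "\<exists>L. L-lipschitz_on UNIV p"
    and q_cont: "continuous_on UNIV q" and V_cont: "continuous_on UNIV V"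
    and q_nonneg: "\<forall>x. 0 \<le> q x" and V_nonneg: "\<forall>x. 0 \<le> V x" and V_per: "Z_periodic V"
    and p_bdd: "bdd_below (range p)" "bdd_above (range p)"
    and p_minus: "1 < Inf (range p)"
    and p_plus: "Sup (range p) < real DIM('a)"
    and pq: "Sup (range p) < Inf (range q)"
    and q_pstar: "\<exists>\<epsilon>>0. \<forall>x. q x + \<epsilon> \<le> pstar p x"
  obtains ps_hi V_hi where
    "variable_exponent_setting p q V (Inf (range p)) (Sup (range p)) (Inf (range q)) ps_hi V_hi"
proof -
  define N where "N = real DIM('a)"
  define pm pM qm where "pm = Inf (range p)" "pM = Sup (range p)" "qm = Inf (range q)"
  have p_le: "pm \<le> p x" "p x \<le> pM" for x
    unfolding pm_pM_qm_def using p_bdd by (simp_all add: cInf_lower cSup_upper)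
  have qm: "qm \<le> q x" for x
    unfolding pm_pM_qm_def using q_nonneg by (intro cInf_lower) (auto intro: bdd_belowI[of _ 0])
  obtain \<epsilon> where \<epsilon>: "0 < \<epsilon>" "\<And>x. q x + \<epsilon> \<le> pstar p x" using q_pstar by blast
  have pstar_le: "pstar p x \<le> N * pM / (N - pM)" for x
  proof -
    have "p x / (N - p x) \<le> pM / (N - pM)"
      using p_le[of x] p_minus p_plus unfolding pm_pM_qm_def N_def by (intro frac_le) auto
    then have "N * (p x / (N - p x)) \<le> N * (pM / (N - pM))"
      by (rule mult_left_mono) (simp add: N_def)
    then show ?thesis by (simp add: pstar_def N_def)
  qed
  obtain L where "L-lipschitz_on UNIV p" using p_lip by blast
  then have "continuous_on UNIV p" by (rule lipschitz_on_continuous_on)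
  moreover obtain V_hi where "\<And>x. V x \<le> V_hi"
    using Z_periodic_continuous_bounded[OF V_cont V_per] by blast
  ultimately have "variable_exponent_setting p q V pm pM qm (N * pM / (N - pM)) V_hi"
  proof unfold_locales
    show "p \<in> borel_measurable lborel" by (rule borel_measurable_lborel_continuous) fact
    show "q \<in> borel_measurable lborel" "V \<in> borel_measurable lborel"
      using borel_measurable_lborel_continuous[OF q_cont] borel_measurable_lborel_continuous[OF V_cont]
      by simp_all
    show "1 \<le> pm" "pM < qm" using p_minus pq unfolding pm_pM_qm_def by simp_all
    show "q x \<le> N * pM / (N - pM)" "qm \<le> pstar p x" for x
      using qm[of x] \<epsilon>(1) \<epsilon>(2)[of x] pstar_le[of x] by linarith+
  qed (use V_nonneg p_le qm pstar_le in auto)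
  then show ?thesis unfolding pm_pM_qm_def by (rule that)
qed

theorem lemma2p2:
  fixes p q V :: "'a::euclidean_space \<Rightarrow> real" and \<mu> K d :: real and v :: "nat \<Rightarrow> 'a \<Rightarrow> real"
  assumes dim: "2 \<le> DIM('a)"
    and p_lip: "\<exists>L. L-lipschitz_on UNIV p"
    and q_cont: "continuous_on UNIV q" and V_cont: "continuous_on UNIV V"
    and q_nonneg: "\<forall>x. 0 \<le> q x" and V_nonneg: "\<forall>x. 0 \<le> V x"
    and per: "Z_periodic p" "Z_periodic q" "Z_periodic V"
    and p_bdd: "bdd_below (range p)" "bdd_above (range p)"
    and p_minus: "1 < Inf (range p)"
    and p_plus: "Sup (range p) < real DIM('a)"
    and pq: "Sup (range p) < Inf (range q)"
    and q_pstar: "\<exists>\<epsilon>>0. \<forall>x. q x + \<epsilon> \<le> pstar p x"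
    and V0: "0 < Inf (range V)"
    and mu: "0 < \<mu>"
    and K: "1 \<le> K"
    and sobolev: "\<forall>u \<in> sobW p. lux (pstar p) u \<le> K * wnorm V p u"
    and vW: "\<forall>n. v n \<in> sobW p"
    and PS1: "(\<lambda>n. I_inf \<mu> p q V (v n)) \<longlonglongrightarrow> d"
    and PS2: "\<forall>\<epsilon>>0. eventually (\<lambda>n. \<forall>\<phi>\<in>sobW p. wnorm V p \<phi> \<le> 1 \<longrightarrow>
                 \<bar>I_inf_deriv \<mu> p q V (v n) \<phi>\<bar> \<le> \<epsilon>) sequentially"
    and d: "d < (1 / Sup (range p) - 1 / Inf (range q)) / (2 * K powr Sup (range p))"
  shows "\<exists>n0. \<forall>n\<ge>n0.
    (\<integral>x. \<bar>v n x\<bar> powr pstar p x \<partial>lborel) powr (1 / Inf (range (pstar p)))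
      \<le> K * (\<integral>x. norm (grad p (v n) x) powr p x + V x * \<bar>v n x\<bar> powr p x \<partial>lborel)
              powr (1 / Sup (range p))"
proof -
  obtain ps_hi V_hi where
    "variable_exponent_setting p q V (Inf (range p)) (Sup (range p)) (Inf (range q)) ps_hi V_hi"
    using variable_exponent_setting_if_periodic[OF dim p_lip q_cont V_cont q_nonneg V_nonneg per(3)
        p_bdd p_minus p_plus pq q_pstar] .
  then interpret variable_exponent_setting p q V "Inf (range p)" "Sup (range p)" "Inf (range q)" ps_hi V_hi .
  have "0 < 1 / Sup (range p) - 1 / Inf (range q)"
    using p_hi_pos pq by (simp add: frac_less2)
  then have "d < (1 / Sup (range p) - 1 / Inf (range q)) * (1 / K powr Sup (range p))"
    using d K by (simp add: field_simps)
  from PS_sequence_critical_bound[OF mu K sobolev vW PS1 PS2 this]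
  show ?thesis unfolding sob_modular_def .
qed

end
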